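(* Let $m \geq 0$, $n \geq 1$ be integers. For every $w = w_1 \cdots w_{m+n-1} \in \mathrm{Motz}_{m,n-1}$, the configuration $c(w)$ is a sorted deterministically recurrent configuration on $K_{m,n}^0$, and $\Xi(\Phi(c(w))) = w$. Consequently, $w \mapsto c(w)$ is the bijection $\Phi^{-1} \circ \Xi^{-1}$ from $\mathrm{Motz}_{m,n-1}$ to the set of sorted deterministically recurrent configurations on $K_{m,n}^0$.
   Context: $K_{m,n}^0$ is the complete bipartite graph with "top" vertices $v^t_0, \ldots, v^t_m$ and "bottom" vertices $v^b_1, \ldots, v^b_n$, with an edge between every top and every bottom vertex; $v^t_0$ is the sink. A configuration is a vector $c = (c^t_1, \ldots, c^t_m; c^b_1, \ldots, c^b_n)$ of non-negative integers; it is sorted if $c^t$, $c^b$ are weakly increasing, stable if $c^t_i < n$ and $c^b_j < m+1$ for all $i,j$. Abelian sandpile model (ASM): an unstable non-sink vertex topples by sending one grain to each neighbour (bottom vertices also to the sink); grains sent to the sink disappear. In the Markov chain on stable configurations which adds a grain to a uniformly random non-sink vertex and stabilises by the ASM, a stable configuration is deterministically recurrent if it is a recurrent state. Labelled Motzkin paths: words in steps $U=(1,1)$, $D=(1,-1)$ and horizontal steps $H^N, H^E$ (both $=(1,0)$), starting and ending at height $0$ and never going below the $x$-axis. $\mathrm{Motz}_{m,n-1}$ is the set of such paths with $m+n-1$ steps, exactly $m$ of which are $U$ or $H^E$ (equivalently exactly $n-1$ are $D$ or $H^N$). For $w \in \mathrm{Motz}_{m,n-1}$, $c(w) = (c^t;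 c^b)$ is defined by: for $i \in \{1,\ldots,m\}$, if $w_j$ is the $i$-th step of $w$ belonging to $\{D, H^E\}$, then $c^t_i := |\{ j' < j : w_{j'} \in \{U, H^N\}\}|$; for $j \in \{1,\ldots,n-1\}$, if $w_i$ is the $j$-th step of $w$ belonging to $\{D, H^N\}$, then $c^b_j := |\{ i' < i : w_{i'} \in \{U, H^E\}\}|$; and $c^b_n := m$. A parallelogram polyomino in the box $[0,m+1]\times[0,n]$ is the set of unit cells between two lattice paths $\mathcal{U}$ (upper) and $\mathcal{L}$ (lower) from $(0,0)$ to $(m+1,n)$ with steps $N=(0,1)$, $E=(1,0)$, meeting only at their endpoints; necessarily $\mathcal{U} = (N, u_1, \ldots, u_{m+n-1}, E)$ and $\mathcal{L} = (E, \ell_1, \ldots, \ell_{m+n-1}, N)$. The map $\Xi$ sends such a polyomino to $w_1 \cdots w_{m+n-1}$ with $w_i = U$ if $(u_i,\ell_i) = (N,E)$, $w_i = H^N$ if $(u_i,\ell_i)=(N,N)$, $w_i = H^E$ if $(u_i,\ell_i) = (E,E)$, $w_i = D$ if $(u_i,\ell_i) = (E,N)$; it is known to be a bijection onto $\mathrm{Motz}_{m,n-1}$. The Dukes–Le Borgne map $\Phi$: for a sorted stable $c$, $\mathcal{U}(c^t)$ is the path from $(0,0)$ to $(m+1,n)$ whose $E$ steps occur at heights $1+c^t_1, \ldots, 1+c^t_m, n$, and $\mathcal{L}(c^b)$ the path from $(0,0)$ to $(m+1,n)$ whose $N$ steps occur at $x$-coordinates $1+c^b_1, \ldots, 1+c^b_n$;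 $\Phi(c)$ is the polyomino between them. It is known that $\Phi$ is a bijection from sorted deterministically recurrent configurations on $K_{m,n}^0$ to parallelogram polyominoes in $[0,m+1]\times[0,n]$. *)

theory Defs
  imports Main
begin

datatype vtx = T nat | B nat

definition nonsink :: "nat \<Rightarrow> nat \<Rightarrow> vtx set" where
  "nonsink m n = {T i | i. 1 \<le> i \<and> i \<le> m} \<union> {B j | j. 1 \<le> j \<and> j \<le> n}"

definition verts :: "nat \<Rightarrow> nat \<Rightarrow> vtx set" where
  "verts m n = insert (T 0) (nonsink m n)"

definition adj :: "nat \<Rightarrow> nat \<Rightarrow> vtx \<Rightarrow> vtx \<Rightarrow> bool" where
  "adj m n u v = (\<exists>i j. i \<le> m \<and> 1 \<le> j \<and> j \<le> n \<and> ((u = T i \<and> v = B j) \<or> (u = B j \<and> v = T i)))"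

definition deg :: "nat \<Rightarrow> nat \<Rightarrow> vtx \<Rightarrow> nat" where
  "deg m n v = card {u \<in> verts m n. adj m n v u}"

type_synonym config = "vtx \<Rightarrow> nat"

definition valid_cfg :: "nat \<Rightarrow> nat \<Rightarrow> config \<Rightarrow> bool" where
  "valid_cfg m n c = (\<forall>v. v \<notin> nonsink m n \<longrightarrow> c v = 0)"

definition stable :: "nat \<Rightarrow> nat \<Rightarrow> config \<Rightarrow> bool" where
  "stable m n c = (\<forall>v \<in> nonsink m n. c v < deg m n v)"

definition sorted_cfg :: "nat \<Rightarrow> nat \<Rightarrow> config \<Rightarrow> bool" where
  "sorted_cfg m n c =
     ((\<forall>i. 1 \<le> i \<and> i < m \<longrightarrow> c (T i) \<le> c (T (Suc i))) \<and>
      (\<forall>j. 1 \<le> j \<and> j < n \<longrightarrow> c (B j) \<le> c (B (Suc j))))"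

definition topple :: "nat \<Rightarrow> nat \<Rightarrow> vtx \<Rightarrow> config \<Rightarrow> config" where
  "topple m n v c = (\<lambda>u. if u = v then c u - deg m n v
                        else if u \<in> nonsink m n \<and> adj m n v u then c u + 1 else c u)"

definition topple_step :: "nat \<Rightarrow> nat \<Rightarrow> config \<Rightarrow> config \<Rightarrow> bool" where
  "topple_step m n c c' = (\<exists>v \<in> nonsink m n. deg m n v \<le> c v \<and> c' = topple m n v c)"

definition stabilises_to :: "nat \<Rightarrow> nat \<Rightarrow> config \<Rightarrow> config \<Rightarrow> bool" where
  "stabilises_to m n c d = ((topple_step m n)\<^sup>*\<^sup>* c d \<and> stable m n d)"

text \<open>Transition relation of the Markov chain on stable configurations: add a grain at
  some non-sink vertex (each has positive probability) and stabilise.\<close>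
definition chain_step :: "nat \<Rightarrow> nat \<Rightarrow> config \<Rightarrow> config \<Rightarrow> bool" where
  "chain_step m n c d = (valid_cfg m n c \<and> stable m n c \<and>
      (\<exists>v \<in> nonsink m n. stabilises_to m n (c(v := Suc (c v))) d))"

text \<open>Recurrent state of a finite Markov chain: every state accessible from c leads back to c.\<close>
definition det_recurrent :: "nat \<Rightarrow> nat \<Rightarrow> config \<Rightarrow> bool" where
  "det_recurrent m n c = (valid_cfg m n c \<and> stable m n c \<and>
      (\<forall>d. (chain_step m n)\<^sup>*\<^sup>* c d \<longrightarrow> (chain_step m n)\<^sup>*\<^sup>* d c))"

definition SDR :: "nat \<Rightarrow> nat \<Rightarrow> config set" where
  "SDR m n = {c. sorted_cfg m n c \<and> det_recurrent m n c}"

datatype mstep = MU | MD | MHN | MHE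

fun hstep :: "mstep \<Rightarrow> int" where
  "hstep MU = 1" | "hstep MD = -1" | "hstep MHN = 0" | "hstep MHE = 0"

definition height :: "mstep list \<Rightarrow> int" where
  "height w = sum_list (map hstep w)"

definition Motz :: "nat \<Rightarrow> nat \<Rightarrow> mstep list set" where
  "Motz m k = {w. length w = m + k \<and>
                  length (filter (\<lambda>s. s = MU \<or> s = MHE) w) = m \<and>
                  (\<forall>j \<le> length w. height (take j w) \<ge> 0) \<and> height w = 0}"

text \<open>Positions (0-based) of the steps satisfying P, and the number of steps satisfying Q
  strictly before position j.\<close>
definition positions :: "(mstep \<Rightarrow> bool) \<Rightarrow> mstep list \<Rightarrow> nat list" where
  "positions P w = filter (\<lambda>j. P (w ! j)) [0..<length w]"

definition count_before :: "(mstep \<Rightarrow> bool) \<Rightarrow> mstep list \<Rightarrow> nat \<Rightarrow> nat" where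
  "count_before Q w j = length (filter Q (take j w))"

definition cfg_of :: "nat \<Rightarrow> nat \<Rightarrow> mstep list \<Rightarrow> config" where
  "cfg_of m n w = (\<lambda>v. case v of
      T i \<Rightarrow> if 1 \<le> i \<and> i \<le> m then
               count_before (\<lambda>s. s = MU \<or> s = MHN) w (positions (\<lambda>s. s = MD \<or> s = MHE) w ! (i - 1))
             else 0
    | B j \<Rightarrow> if 1 \<le> j \<and> j < n then
               count_before (\<lambda>s. s = MU \<or> s = MHE) w (positions (\<lambda>s. s = MD \<or> s = MHN) w ! (j - 1))
             else if j = n then m else 0)"

datatype dir = dN | dE

definition lpt :: "dir list \<Rightarrow> nat \<Rightarrow> nat \<times> nat" where
  "lpt p k = (length (filter (\<lambda>s. s = dE) (take k p)), length (filter (\<lambda>s. s = dN) (take k p)))"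

definition lpts :: "dir list \<Rightarrow> (nat \<times> nat) set" where
  "lpts p = {lpt p k | k. k \<le> length p}"

text \<open>A parallelogram polyomino in [0,m+1]x[0,n], represented by its pair of bounding paths
  (upper, lower); the upper one is the one starting with a north step. The pair determines and is determined by its set of cells.\<close>
definition Polys :: "nat \<Rightarrow> nat \<Rightarrow> (dir list \<times> dir list) set" where
  "Polys m n = {(Up, Lo).
      length Up = m + 1 + n \<and> length (filter (\<lambda>s. s = dE) Up) = m + 1 \<and>
      length Lo = m + 1 + n \<and> length (filter (\<lambda>s. s = dE) Lo) = m + 1 \<and>
      lpts Up \<inter> lpts Lo = {(0, 0), (m + 1, n)} \<and>
      Up \<noteq> [] \<and> hd Up = dN}"

fun xi_step :: "dir \<Rightarrow> dir \<Rightarrow> mstep" where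
  "xi_step dN dE = MU"
| "xi_step dN dN = MHN"
| "xi_step dE dE = MHE"
| "xi_step dE dN = MD"

definition Xi :: "dir list \<times> dir list \<Rightarrow> mstep list" where
  "Xi P = map (\<lambda>(u, l). xi_step u l) (zip (butlast (tl (fst P))) (butlast (tl (snd P))))"

text \<open>Path with steps a at the successive "levels" hs (level = number of b steps before),
  completed with b steps up to level tp.\<close>
fun path_at :: "dir \<Rightarrow> dir \<Rightarrow> nat \<Rightarrow> nat list \<Rightarrow> nat \<Rightarrow> dir list" where
  "path_at b a prev [] tp = replicate (tp - prev) b"
| "path_at b a prev (h # hs) tp = replicate (h - prev) b @ a # path_at b a h hs tp"

definition Phi :: "nat \<Rightarrow> nat \<Rightarrow> config \<Rightarrow> dir list \<times> dir list" where
  "Phi m n c =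
     (path_at dN dE 0 (map (\<lambda>i. 1 + c (T i)) [1..<m + 1] @ [n]) n,
      path_at dE dN 0 (map (\<lambda>j. 1 + c (B j)) [1..<n + 1]) (m + 1))"

end

(*
  A stable configuration on K_{m,n}^0 is recurrent iff it has no forbidden subconfiguration:
  such subconfigurations are never created by adding grains or toppling, the maximal stable
  configuration has none, and without one Dhar's burning algorithm shows that c plus one grain
  from the sink on every bottom vertex topples back to c, which lets the Markov chain reach c
  from the maximal stable configuration. For sorted c it suffices to test the sets
  {1..p} x {1..q}, i.e. c^t_p >= q or c^b_q >= p for all p, q.

  For c = c(w), c^t_p counts the N steps of the upper path of w before its p-th E step and
  c^b_q the E steps of the lower path before its q-th N step. The test above then says that
  the upper path never gets strictly to the right of the lower one, i.e. that w never goes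
  below the axis; and Phi(c(w)) is exactly the pair of boundary paths that Xi reads back as w.
*)
theory Submission
  imports Defs "HOL-Library.Function_Algebras" "HOL-Library.Confluence"
begin

lemma nonsink_iff [simp]:
  "T i \<in> nonsink m n \<longleftrightarrow> 1 \<le> i \<and> i \<le> m"
  "B j \<in> nonsink m n \<longleftrightarrow> 1 \<le> j \<and> j \<le> n"
  by (auto simp: nonsink_def)

lemma finite_nonsink [simp]: "finite (nonsink m n)"
proof -
  have "nonsink m n = T ` {1..m} \<union> B ` {1..n}"
    by (auto simp: nonsink_def)
  then show ?thesis by simp
qed

lemma adj_simps [simp]:
  "adj m n (T i) (B j) \<longleftrightarrow> i \<le> m \<and> 1 \<le> j \<and> j \<le> n"
  "adj m n (B j) (T i) \<longleftrightarrow> i \<le> m \<and> 1 \<le> j \<and> j \<le> n"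
  "\<not> adj m n (T i) (T i')"
  "\<not> adj m n (B j) (B j')"
  by (auto simp: adj_def)

lemma deg_T: "i \<le> m \<Longrightarrow> deg m n (T i) = n"
proof -
  assume "i \<le> m"
  then have "{u \<in> verts m n. adj m n (T i) u} = B ` {1..n}"
    by (auto simp: verts_def nonsink_def adj_def)
  then show ?thesis unfolding deg_def by (simp add: card_image inj_on_def)
qed

lemma deg_B: "1 \<le> j \<Longrightarrow> j \<le> n \<Longrightarrow> deg m n (B j) = Suc m"
proof -
  assume "1 \<le> j" "j \<le> n"
  then have "{u \<in> verts m n. adj m n (B j) u} = T ` {0..m}"
    by (auto simp: verts_def nonsink_def adj_def)
  then show ?thesis unfolding deg_def by (simp add: card_image inj_on_def)
qed

lemma topple_T:
  assumes "1 \<le> i" "i \<le> m"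
  shows "topple m n (T i) c (T i') = (if i' = i then c (T i) - n else c (T i'))"
    and "topple m n (T i) c (B j) = (if 1 \<le> j \<and> j \<le> n then Suc (c (B j)) else c (B j))"
  using assms by (auto simp: topple_def deg_T)

lemma topple_B:
  assumes "1 \<le> j" "j \<le> n"
  shows "topple m n (B j) c (B j') = (if j' = j then c (B j) - Suc m else c (B j'))"
    and "topple m n (B j) c (T i) = (if 1 \<le> i \<and> i \<le> m then Suc (c (T i)) else c (T i))"
  using assms by (auto simp: topple_def deg_B)

lemma stable_iff:
  "stable m n c \<longleftrightarrow>
     (\<forall>i. 1 \<le> i \<and> i \<le> m \<longrightarrow> c (T i) < n) \<and> (\<forall>j. 1 \<le> j \<and> j \<le> n \<longrightarrow> c (B j) \<le> m)"
proof -
  have "stable m n c \<longleftrightarrow> (\<forall>v\<in>nonsink m n. c v < deg m n v)"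
    by (simp add: stable_def)
  also have "\<dots> \<longleftrightarrow> (\<forall>i. 1 \<le> i \<and> i \<le> m \<longrightarrow> c (T i) < n) \<and> (\<forall>j. 1 \<le> j \<and> j \<le> n \<longrightarrow> c (B j) < Suc m)"
    by (metis (no_types, lifting) deg_B deg_T nonsink_iff vtx.exhaust)
  finally show ?thesis by (simp add: less_Suc_eq_le)
qed

lemma valid_cfg_iff:
  "valid_cfg m n c \<longleftrightarrow>
     (\<forall>i. \<not> (1 \<le> i \<and> i \<le> m) \<longrightarrow> c (T i) = 0) \<and> (\<forall>j. \<not> (1 \<le> j \<and> j \<le> n) \<longrightarrow> c (B j) = 0)"
  unfolding valid_cfg_def by (metis nonsink_iff vtx.exhaust)

lemma stable_no_topple_step: "stable m n c \<Longrightarrow> \<not> topple_step m n c c'"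
  unfolding stable_def topple_step_def using leD by blast

lemma stable_topple_steps_eq: "stable m n c \<Longrightarrow> (topple_step m n)\<^sup>*\<^sup>* c d \<Longrightarrow> d = c"
  by (metis converse_rtranclpE stable_no_topple_step)

lemma topple_step_valid: "topple_step m n c c' \<Longrightarrow> valid_cfg m n c \<Longrightarrow> valid_cfg m n c'"
  unfolding topple_step_def valid_cfg_def topple_def by auto

lemma topple_steps_valid:
  "(topple_step m n)\<^sup>*\<^sup>* c c' \<Longrightarrow> valid_cfg m n c \<Longrightarrow> valid_cfg m n c'"
  by (induction rule: rtranclp_induct) (auto intro: topple_step_valid)

section \<open>Stabilisation exists and is unique\<close>

text \<open>Toppling a top vertex moves n grains of weight 2m+2 to bottom vertices of weight 2m+1;
  toppling a bottom vertex moves m+1 grains of weight 2m+1 to m top vertices and the sink.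
  Either way the weight drops.\<close>
definition weight :: "nat \<Rightarrow> nat \<Rightarrow> config \<Rightarrow> nat" where
  "weight m n c = (\<Sum>i=1..m. (2*m+2) * c (T i)) + (\<Sum>j=1..n. (2*m+1) * c (B j))"

lemma weight_topple_T:
  assumes "1 \<le> i" "i \<le> m" "n \<le> c (T i)"
  shows "weight m n (topple m n (T i) c) + n = weight m n c"
proof -
  let ?c' = "topple m n (T i) c"
  have pointwise: "c (T i') = ?c' (T i') + (if i' = i then n else 0)" for i'
    using assms by (simp add: topple_T)
  have "(2*m+2) * c (T i') = (2*m+2) * ?c' (T i') + (if i' = i then (2*m+2) * n else 0)" for i'
    by (subst pointwise) (simp add: distrib_left)
  then have "(\<Sum>i'=1..m. (2*m+2) * c (T i')) = (\<Sum>i'=1..m. (2*m+2) * ?c' (T i')) + (2*m+2) * n"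
    using assms by (simp add: sum.distrib)
  moreover have "(\<Sum>j=1..n. (2*m+1) * ?c' (B j)) = (\<Sum>j=1..n. (2*m+1) * c (B j) + (2*m+1))"
    using assms by (intro sum.cong) (simp_all add: topple_T)
  then have "(\<Sum>j=1..n. (2*m+1) * ?c' (B j)) = (\<Sum>j=1..n. (2*m+1) * c (B j)) + n * (2*m+1)"
    unfolding sum.distrib by simp
  ultimately show ?thesis
    unfolding weight_def by (simp add: algebra_simps)
qed

lemma weight_topple_B:
  assumes "1 \<le> j" "j \<le> n" "Suc m \<le> c (B j)"
  shows "weight m n (topple m n (B j) c) + Suc m = weight m n c"
proof -
  let ?c' = "topple m n (B j) c"
  have pointwise: "c (B j') = ?c' (B j') + (if j' = j then Suc m else 0)" for j'
    using assms by (simp add: topple_B)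
  have "(2*m+1) * c (B j') = (2*m+1) * ?c' (B j') + (if j' = j then (2*m+1) * Suc m else 0)" for j'
    by (subst pointwise) (simp add: distrib_left)
  then have "(\<Sum>j'=1..n. (2*m+1) * c (B j')) = (\<Sum>j'=1..n. (2*m+1) * ?c' (B j')) + (2*m+1) * Suc m"
    using assms by (simp add: sum.distrib)
  moreover have "(\<Sum>i=1..m. (2*m+2) * ?c' (T i)) = (\<Sum>i=1..m. (2*m+2) * c (T i) + (2*m+2))"
    using assms by (intro sum.cong) (simp_all add: topple_B)
  then have "(\<Sum>i=1..m. (2*m+2) * ?c' (T i)) = (\<Sum>i=1..m. (2*m+2) * c (T i)) + m * (2*m+2)"
    unfolding sum.distrib by simp
  ultimately show ?thesis
    unfolding weight_def by (simp add: algebra_simps)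
qed

lemma weight_topple_step_less:
  assumes "1 \<le> n" "topple_step m n c c'"
  shows "weight m n c' < weight m n c"
proof -
  obtain v where v: "v \<in> nonsink m n" "deg m n v \<le> c v" "c' = topple m n v c"
    using assms(2) unfolding topple_step_def by blast
  show ?thesis
  proof (cases v)
    case (T i)
    then show ?thesis using v assms(1) weight_topple_T[of i m n c] by (simp add: deg_T)
  next
    case (B j)
    then show ?thesis using v weight_topple_B[of j n m c] by (simp add: deg_B)
  qed
qed

lemma stabilisation_exists: "1 \<le> n \<Longrightarrow> \<exists>d. stabilises_to m n c d"
proof (induction "weight m n c" arbitrary: c rule: less_induct)
  case less
  show ?case
  proof (cases "stable m n c")
    case True
    then show ?thesis unfolding stabilises_to_def by blast
  next
    case False
    then obtain v where "v \<in> nonsink m n" "deg m n v \<le> c v"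
      unfolding stable_def by (auto simp: not_less)
    then have step: "topple_step m n c (topple m n v c)"
      unfolding topple_step_def by blast
    then obtain d where "stabilises_to m n (topple m n v c) d"
      using less weight_topple_step_less by blast
    then show ?thesis
      using step unfolding stabilises_to_def by (meson converse_rtranclp_into_rtranclp)
  qed
qed

text \<open>The degree hypotheses exclude truncation in the subtraction c v - deg m n v.\<close>
lemma topple_commute:
  assumes "v \<noteq> v'" "deg m n v \<le> c v" "deg m n v' \<le> c v'"
  shows "topple m n v' (topple m n v c) = topple m n v (topple m n v' c)"
  using assms by (auto simp: topple_def fun_eq_iff Suc_diff_le)

lemma topple_step_strong_confluent: "strong_confluentp (topple_step m n)"
proof
  fix c c1 c2
  assume "topple_step m n c c1" "topple_step m n c c2"
  then obtain v1 v2 where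
    v1: "v1 \<in> nonsink m n" "deg m n v1 \<le> c v1" "c1 = topple m n v1 c" and
    v2: "v2 \<in> nonsink m n" "deg m n v2 \<le> c v2" "c2 = topple m n v2 c"
    unfolding topple_step_def by blast
  show "\<exists>d. (topple_step m n)\<^sup>*\<^sup>* c1 d \<and> (topple_step m n)\<^sup>=\<^sup>= c2 d"
  proof (cases "v1 = v2")
    case True
    then show ?thesis using v1 v2 by auto
  next
    case False
    then have "deg m n v2 \<le> c1 v2" "deg m n v1 \<le> c2 v1"
      using v1 v2 unfolding topple_def by simp_all
    then have "topple_step m n c1 (topple m n v2 c1)" "topple_step m n c2 (topple m n v1 c2)"
      using v1(1) v2(1) unfolding topple_step_def by blast+
    moreover have "topple m n v2 c1 = topple m n v1 c2"
      using topple_commute[OF False v1(2) v2(2)] v1(3) v2(3) by simp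
    ultimately show ?thesis by (metis r_into_rtranclp sup2CI)
  qed
qed

lemma topple_step_confluent:
  "(topple_step m n)\<^sup>*\<^sup>* c d \<Longrightarrow> (topple_step m n)\<^sup>*\<^sup>* c d' \<Longrightarrow>
     \<exists>e. (topple_step m n)\<^sup>*\<^sup>* d e \<and> (topple_step m n)\<^sup>*\<^sup>* d' e"
  by (rule confluentpD[OF strong_confluentp_imp_confluentp[OF topple_step_strong_confluent]])

lemma stabilisation_unique:
  assumes "stabilises_to m n c d" "stabilises_to m n c d'"
  shows "d = d'"
proof -
  obtain e where "(topple_step m n)\<^sup>*\<^sup>* d e" "(topple_step m n)\<^sup>*\<^sup>* d' e"
    using assms topple_step_confluent unfolding stabilises_to_def by blast
  moreover have "stable m n d" "stable m n d'"
    using assms unfolding stabilises_to_def by auto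
  ultimately show ?thesis
    using stable_topple_steps_eq by metis
qed

lemma topple_add: "deg m n v \<le> c v \<Longrightarrow> topple m n v (c + a) = topple m n v c + a"
  by (auto simp: topple_def plus_fun_def fun_eq_iff)

lemma topple_steps_add:
  "(topple_step m n)\<^sup>*\<^sup>* c c' \<Longrightarrow> (topple_step m n)\<^sup>*\<^sup>* (c + a) (c' + a)"
proof (induction rule: rtranclp_induct)
  case (step c' c'')
  then obtain v where v: "v \<in> nonsink m n" "deg m n v \<le> c' v" "c'' = topple m n v c'"
    unfolding topple_step_def by blast
  then have "deg m n v \<le> (c' + a) v"
    by (simp add: plus_fun_def)
  then have "topple_step m n (c' + a) (c'' + a)"
    using v unfolding topple_step_def by (metis topple_add)
  with step.IH show ?case by (meson rtranclp.rtrancl_into_rtrancl)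
qed simp

lemma chain_step_valid_stable:
  assumes "chain_step m n c d"
  shows "valid_cfg m n d \<and> stable m n d"
proof -
  obtain v where v: "valid_cfg m n c" "v \<in> nonsink m n" "stabilises_to m n (c(v := Suc (c v))) d"
    using assms unfolding chain_step_def by blast
  then have "valid_cfg m n (c(v := Suc (c v)))"
    unfolding valid_cfg_def by auto
  then show ?thesis
    using v(3) topple_steps_valid unfolding stabilises_to_def by blast
qed

lemma chain_steps_valid_stable:
  "(chain_step m n)\<^sup>*\<^sup>* c d \<Longrightarrow> valid_cfg m n c \<Longrightarrow> stable m n c \<Longrightarrow> valid_cfg m n d \<and> stable m n d"
  by (induction rule: rtranclp_induct) (auto dest: chain_step_valid_stable)

lemma stable_le: "stable m n d \<Longrightarrow> c \<le> d \<Longrightarrow> stable m n c"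
  unfolding stable_def le_fun_def using le_less_trans by blast

definition max_stable :: "nat \<Rightarrow> nat \<Rightarrow> config" where
  "max_stable m n = (\<lambda>v. if v \<in> nonsink m n then deg m n v - 1 else 0)"

lemma max_stable_simps [simp]:
  "max_stable m n (T i) = (if 1 \<le> i \<and> i \<le> m then n - 1 else 0)"
  "max_stable m n (B j) = (if 1 \<le> j \<and> j \<le> n then m else 0)"
  by (simp_all add: max_stable_def deg_T deg_B)

lemma valid_max_stable: "valid_cfg m n (max_stable m n)"
  by (simp add: valid_cfg_def max_stable_def)

lemma stable_max_stable: "1 \<le> n \<Longrightarrow> stable m n (max_stable m n)"
  by (simp add: stable_iff)

lemma le_max_stable: "valid_cfg m n c \<Longrightarrow> stable m n c \<Longrightarrow> c \<le> max_stable m n"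
  unfolding le_fun_def max_stable_def valid_cfg_def stable_def by auto

lemma chain_steps_to_max_stable:
  assumes "1 \<le> n"
  shows "valid_cfg m n c \<Longrightarrow> stable m n c \<Longrightarrow> (chain_step m n)\<^sup>*\<^sup>* c (max_stable m n)"
proof (induction "\<Sum>v\<in>nonsink m n. max_stable m n v - c v" arbitrary: c rule: less_induct)
  case less
  show ?case
  proof (cases "c = max_stable m n")
    case False
    then obtain v where "c v \<noteq> max_stable m n v"
      by auto
    moreover have "c \<le> max_stable m n"
      using le_max_stable less.prems .
    ultimately have v: "v \<in> nonsink m n" "c v < max_stable m n v"
      using less.prems(1) unfolding valid_cfg_def max_stable_def le_fun_def
      by (metis le_neq_implies_less)+
    define c' where "c' = c(v := Suc (c v))"
    have "c' \<le> max_stable m n"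
      using \<open>c \<le> max_stable m n\<close> v(2) by (simp add: c'_def le_fun_def)
    then have c': "valid_cfg m n c'" "stable m n c'"
      using less.prems(1) v(1) stable_le[OF stable_max_stable[OF assms]]
      by (auto simp: c'_def valid_cfg_def)
    have "chain_step m n c c'"
      unfolding chain_step_def stabilises_to_def using less.prems v(1) c' c'_def by blast
    moreover have "(\<Sum>v\<in>nonsink m n. max_stable m n v - c' v) < (\<Sum>v\<in>nonsink m n. max_stable m n v - c v)"
      using v by (intro sum_strict_mono_ex1) (auto simp: c'_def)
    ultimately show ?thesis
      using less.hyps[OF _ c'] by (meson converse_rtranclp_into_rtranclp)
  qed simp
qed

lemma stabilises_to_add_stabilised:
  assumes "1 \<le> n" "stabilises_to m n c c'" "stabilises_to m n (c + a) d"
  shows "stabilises_to m n (c' + a) d"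
proof -
  obtain d' where d': "stabilises_to m n (c' + a) d'"
    using stabilisation_exists[OF assms(1)] by blast
  moreover have "(topple_step m n)\<^sup>*\<^sup>* (c + a) (c' + a)"
    using assms(2) topple_steps_add unfolding stabilises_to_def by blast
  ultimately have "stabilises_to m n (c + a) d'"
    unfolding stabilises_to_def by (meson rtranclp_trans)
  then show ?thesis
    using d' assms(3) stabilisation_unique by metis
qed

text \<open>Adding the grains of a to c one at a time, stabilising after each grain, is a walk
  of the Markov chain; by uniqueness of stabilisation it ends in the stabilisation of c + a.\<close>
lemma chain_steps_to_stabilisation_of_add:
  assumes "1 \<le> n"
  shows "valid_cfg m n c \<Longrightarrow> stable m n c \<Longrightarrow> \<forall>v. v \<notin> nonsink m n \<longrightarrow> a v = 0 \<Longrightarrow>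
    stabilises_to m n (c + a) d \<Longrightarrow> (chain_step m n)\<^sup>*\<^sup>* c d"
proof (induction "\<Sum>v\<in>nonsink m n. a v" arbitrary: a c rule: less_induct)
  case less
  show ?case
  proof (cases "\<forall>v\<in>nonsink m n. a v = 0")
    case True
    then have "c + a = c"
      using less.prems(3) by (auto simp: plus_fun_def fun_eq_iff)
    then have "d = c"
      using less.prems(2,4) stable_topple_steps_eq unfolding stabilises_to_def by metis
    then show ?thesis by simp
  next
    case False
    then obtain v where v: "v \<in> nonsink m n" "0 < a v"
      by auto
    define c1 where "c1 = c(v := Suc (c v))"
    define a' where "a' = a(v := a v - 1)"
    obtain d1 where d1: "stabilises_to m n c1 d1"
      using stabilisation_exists[OF assms] by blast
    have step: "chain_step m n c d1"
      unfolding chain_step_def using less.prems(1,2) v(1) d1 c1_def by blast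
    have "c1 + a' = c + a"
      using v by (auto simp: c1_def a'_def plus_fun_def fun_eq_iff)
    then have "stabilises_to m n (d1 + a') d"
      using stabilises_to_add_stabilised[OF assms d1] less.prems(4) by simp
    moreover have "(\<Sum>v\<in>nonsink m n. a' v) < (\<Sum>v\<in>nonsink m n. a v)"
      using v by (intro sum_strict_mono_ex1) (auto simp: a'_def)
    moreover have "\<forall>u. u \<notin> nonsink m n \<longrightarrow> a' u = 0"
      using less.prems(3) v(1) by (auto simp: a'_def)
    ultimately have "(chain_step m n)\<^sup>*\<^sup>* d1 d"
      using less.hyps chain_step_valid_stable[OF step] by blast
    then show ?thesis
      using step by (meson converse_rtranclp_into_rtranclp)
  qed
qed

lemma det_recurrent_iff_reachable_from_max_stable:
  assumes "1 \<le> n"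
  shows "det_recurrent m n c \<longleftrightarrow>
    valid_cfg m n c \<and> stable m n c \<and> (chain_step m n)\<^sup>*\<^sup>* (max_stable m n) c"
proof
  assume "det_recurrent m n c"
  then show "valid_cfg m n c \<and> stable m n c \<and> (chain_step m n)\<^sup>*\<^sup>* (max_stable m n) c"
    using chain_steps_to_max_stable[OF assms] unfolding det_recurrent_def by blast
next
  assume c: "valid_cfg m n c \<and> stable m n c \<and> (chain_step m n)\<^sup>*\<^sup>* (max_stable m n) c"
  have "(chain_step m n)\<^sup>*\<^sup>* d c" if "(chain_step m n)\<^sup>*\<^sup>* c d" for d
  proof -
    have "valid_cfg m n d" "stable m n d"
      using chain_steps_valid_stable that c by blast+
    then have "(chain_step m n)\<^sup>*\<^sup>* d (max_stable m n)"
      using chain_steps_to_max_stable[OF assms] by blast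
    then show ?thesis
      using c by (meson rtranclp_trans)
  qed
  then show "det_recurrent m n c"
    using c unfolding det_recurrent_def by blast
qed

section \<open>Forbidden subconfigurations\<close>

text \<open>The pair (I, J) stands for the vertex set T ` I \<union> B ` J, in which a top vertex has
  card J neighbours and a bottom vertex card I.\<close>
definition forbidden_subconfig :: "nat \<Rightarrow> nat \<Rightarrow> config \<Rightarrow> nat set \<Rightarrow> nat set \<Rightarrow> bool" where
  "forbidden_subconfig m n c I J \<longleftrightarrow> I \<subseteq> {1..m} \<and> J \<subseteq> {1..n} \<and> (I \<noteq> {} \<or> J \<noteq> {}) \<and>
     (\<forall>i\<in>I. c (T i) < card J) \<and> (\<forall>j\<in>J. c (B j) < card I)"

definition no_forbidden_subconfig :: "nat \<Rightarrow> nat \<Rightarrow> config \<Rightarrow> bool" where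
  "no_forbidden_subconfig m n c \<longleftrightarrow> (\<forall>I J. \<not> forbidden_subconfig m n c I J)"

lemma no_forbidden_subconfigD:
  assumes "no_forbidden_subconfig m n c" "I \<subseteq> {1..m}" "J \<subseteq> {1..n}" "I \<noteq> {} \<or> J \<noteq> {}"
  shows "(\<exists>i\<in>I. card J \<le> c (T i)) \<or> (\<exists>j\<in>J. card I \<le> c (B j))"
  using assms unfolding no_forbidden_subconfig_def forbidden_subconfig_def by (meson not_le)

lemma no_forbidden_subconfig_mono:
  "no_forbidden_subconfig m n c \<Longrightarrow> c \<le> c' \<Longrightarrow> no_forbidden_subconfig m n c'"
  unfolding no_forbidden_subconfig_def forbidden_subconfig_def le_fun_def by (meson le_less_trans)

lemma forbidden_subconfig_topple_T:
  assumes "1 \<le> i0" "i0 \<le> m" and forbidden: "forbidden_subconfig m n (topple m n (T i0) c) I J"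
  shows "forbidden_subconfig m n c (I - {i0}) J"
  unfolding forbidden_subconfig_def
proof (intro conjI ballI)
  show IJ: "I - {i0} \<subseteq> {1..m}" "J \<subseteq> {1..n}"
    using forbidden unfolding forbidden_subconfig_def by auto
  show "I - {i0} \<noteq> {} \<or> J \<noteq> {}"
    using forbidden unfolding forbidden_subconfig_def by fastforce
  show "c (T i) < card J" if "i \<in> I - {i0}" for i
    using that forbidden assms(1,2) unfolding forbidden_subconfig_def by (auto simp: topple_T)
  have "finite I"
    using forbidden unfolding forbidden_subconfig_def by (meson finite_atLeastAtMost finite_subset)
  then have "card I \<le> Suc (card (I - {i0}))"
    by (cases "i0 \<in> I") (simp_all add: card_Suc_Diff1)
  moreover have "Suc (c (B j)) < card I" if "j \<in> J" for j
    using that IJ forbidden assms(1,2) unfolding forbidden_subconfig_def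
    by (metis subsetD atLeastAtMost_iff topple_T(2))
  ultimately show "c (B j) < card (I - {i0})" if "j \<in> J" for j
    using that by fastforce
qed

lemma forbidden_subconfig_topple_B:
  assumes "1 \<le> j0" "j0 \<le> n" and forbidden: "forbidden_subconfig m n (topple m n (B j0) c) I J"
  shows "forbidden_subconfig m n c I (J - {j0})"
  unfolding forbidden_subconfig_def
proof (intro conjI ballI)
  show IJ: "I \<subseteq> {1..m}" "J - {j0} \<subseteq> {1..n}"
    using forbidden unfolding forbidden_subconfig_def by auto
  show "I \<noteq> {} \<or> J - {j0} \<noteq> {}"
    using forbidden unfolding forbidden_subconfig_def by fastforce
  show "c (B j) < card I" if "j \<in> J - {j0}" for j
    using that forbidden assms(1,2) unfolding forbidden_subconfig_def by (auto simp: topple_B)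
  have "finite J"
    using forbidden unfolding forbidden_subconfig_def by (meson finite_atLeastAtMost finite_subset)
  then have "card J \<le> Suc (card (J - {j0}))"
    by (cases "j0 \<in> J") (simp_all add: card_Suc_Diff1)
  moreover have "Suc (c (T i)) < card J" if "i \<in> I" for i
    using that IJ forbidden assms(1,2) unfolding forbidden_subconfig_def
    by (metis subsetD atLeastAtMost_iff topple_B(2))
  ultimately show "c (T i) < card (J - {j0})" if "i \<in> I" for i
    using that by fastforce
qed

lemma no_forbidden_subconfig_topple_step:
  assumes "topple_step m n c c'" "no_forbidden_subconfig m n c"
  shows "no_forbidden_subconfig m n c'"
proof -
  obtain v where v: "v \<in> nonsink m n" "c' = topple m n v c"
    using assms(1) unfolding topple_step_def by blast
  show ?thesis
    unfolding no_forbidden_subconfig_def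
  proof (intro allI notI)
    fix I J
    assume forbidden: "forbidden_subconfig m n c' I J"
    show False
    proof (cases v)
      case (T i)
      then show False
        using forbidden_subconfig_topple_T[of i m n c I J] forbidden v assms(2)
        unfolding no_forbidden_subconfig_def by simp
    next
      case (B j)
      then show False
        using forbidden_subconfig_topple_B[of j n m c I J] forbidden v assms(2)
        unfolding no_forbidden_subconfig_def by simp
    qed
  qed
qed

lemma no_forbidden_subconfig_topple_steps:
  "(topple_step m n)\<^sup>*\<^sup>* c c' \<Longrightarrow> no_forbidden_subconfig m n c \<Longrightarrow> no_forbidden_subconfig m n c'"
  by (induction rule: rtranclp_induct) (auto intro: no_forbidden_subconfig_topple_step)

lemma no_forbidden_subconfig_chain_steps:
  "(chain_step m n)\<^sup>*\<^sup>* c d \<Longrightarrow> no_forbidden_subconfig m n c \<Longrightarrow> no_forbidden_subconfig m n d"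
proof (induction rule: rtranclp_induct)
  case (step d d')
  then obtain v where "stabilises_to m n (d(v := Suc (d v))) d'"
    unfolding chain_step_def by blast
  moreover have "no_forbidden_subconfig m n d"
    using step.IH step.prems by blast
  then have "no_forbidden_subconfig m n (d(v := Suc (d v)))"
    by (rule no_forbidden_subconfig_mono) (simp add: le_fun_def)
  ultimately show ?case
    using no_forbidden_subconfig_topple_steps unfolding stabilises_to_def by blast
qed

lemma no_forbidden_subconfig_max_stable: "no_forbidden_subconfig m n (max_stable m n)"
  unfolding no_forbidden_subconfig_def
proof (intro allI notI)
  fix I J
  assume forbidden: "forbidden_subconfig m n (max_stable m n) I J"
  then have IJ: "I \<subseteq> {1..m}" "J \<subseteq> {1..n}" "I \<noteq> {} \<or> J \<noteq> {}"
    and bottoms: "\<forall>j\<in>J. max_stable m n (B j) < card I"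
    unfolding forbidden_subconfig_def by blast+
  have "J \<noteq> {}"
    using forbidden unfolding forbidden_subconfig_def by force
  then obtain j where "j \<in> J"
    by blast
  moreover have "j \<in> {1..n}"
    using IJ(2) \<open>j \<in> J\<close> by blast
  ultimately have "m < card I"
    using bottoms[rule_format, OF \<open>j \<in> J\<close>] by simp
  moreover have "card I \<le> m"
    using IJ(1) card_mono[of "{1..m}" I] by simp
  ultimately show False by simp
qed

lemma det_recurrent_no_forbidden_subconfig:
  "1 \<le> n \<Longrightarrow> det_recurrent m n c \<Longrightarrow> no_forbidden_subconfig m n c"
  using det_recurrent_iff_reachable_from_max_stable no_forbidden_subconfig_chain_steps
    no_forbidden_subconfig_max_stable by blast

subsection \<open>The burning algorithm\<close>

definition sink_grains :: "nat \<Rightarrow> nat \<Rightarrow> config" where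
  "sink_grains n k = (\<lambda>v. case v of T i \<Rightarrow> 0 | B j \<Rightarrow> if 1 \<le> j \<and> j \<le> n then k else 0)"

text \<open>The configuration reached from c + sink_grains n 1 after each vertex of
  T ` I \<union> B ` J has toppled once.\<close>
definition burning_state :: "nat \<Rightarrow> nat \<Rightarrow> config \<Rightarrow> nat set \<Rightarrow> nat set \<Rightarrow> config \<Rightarrow> bool" where
  "burning_state m n c I J x \<longleftrightarrow> valid_cfg m n x \<and>
     (\<forall>i\<in>{1..m}. x (T i) + (if i \<in> I then n else 0) = c (T i) + card J) \<and>
     (\<forall>j\<in>{1..n}. x (B j) + (if j \<in> J then Suc m else 0) = c (B j) + 1 + card I)"

lemma burning_state_start:
  "valid_cfg m n c \<Longrightarrow> burning_state m n c {} {} (c + sink_grains n 1)"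
  by (auto simp: burning_state_def valid_cfg_iff sink_grains_def plus_fun_def)

lemma burning_state_complete:
  assumes "valid_cfg m n c" "burning_state m n c {1..m} {1..n} x"
  shows "x = c"
proof
  fix v
  show "x v = c v"
    using assms by (cases v) (auto simp: burning_state_def valid_cfg_iff)
qed

lemma burning_state_topple_T:
  assumes x: "burning_state m n c I J x" and "finite I" "i \<in> {1..m} - I" "n - card J \<le> c (T i)"
  shows "topple_step m n x (topple m n (T i) x)"
    and "burning_state m n c (insert i I) J (topple m n (T i) x)"
proof -
  have i: "1 \<le> i" "i \<le> m" "i \<notin> I"
    using assms(3) by auto
  have "\<forall>i\<in>{1..m}. x (T i) + (if i \<in> I then n else 0) = c (T i) + card J"
    using x unfolding burning_state_def by blast
  then have xi: "x (T i) = c (T i) + card J"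
    using i by force
  then have "n \<le> x (T i)"
    using assms(4) by linarith
  then show step: "topple_step m n x (topple m n (T i) x)"
    unfolding topple_step_def using i by (auto simp: deg_T intro!: bexI[of _ "T i"])
  show "burning_state m n c (insert i I) J (topple m n (T i) x)"
    using x topple_step_valid[OF step] \<open>n \<le> x (T i)\<close> xi i \<open>finite I\<close>
    unfolding burning_state_def by (auto simp: topple_T)
qed

lemma burning_state_topple_B:
  assumes x: "burning_state m n c I J x" and "finite J" "j \<in> {1..n} - J" "m - card I \<le> c (B j)"
  shows "topple_step m n x (topple m n (B j) x)"
    and "burning_state m n c I (insert j J) (topple m n (B j) x)"
proof -
  have j: "1 \<le> j" "j \<le> n" "j \<notin> J"
    using assms(3) by auto
  have "\<forall>j\<in>{1..n}. x (B j) + (if j \<in> J then Suc m else 0) = c (B j) + 1 + card I"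
    using x unfolding burning_state_def by blast
  then have xj: "x (B j) = c (B j) + 1 + card I"
    using j by force
  then have "Suc m \<le> x (B j)"
    using assms(4) by linarith
  then show step: "topple_step m n x (topple m n (B j) x)"
    unfolding topple_step_def using j by (auto simp: deg_B intro!: bexI[of _ "B j"])
  show "burning_state m n c I (insert j J) (topple m n (B j) x)"
    using x topple_step_valid[OF step] \<open>Suc m \<le> x (B j)\<close> xj j \<open>finite J\<close>
    unfolding burning_state_def by (auto simp: topple_B)
qed

text \<open>The unburnt vertices never form a forbidden subconfiguration, so one of them can topple.\<close>
lemma burning_state_progress:
  assumes "no_forbidden_subconfig m n c" "I \<subseteq> {1..m}" "J \<subseteq> {1..n}"
    "\<not> (I = {1..m} \<and> J = {1..n})" "burning_state m n c I J x"
  obtains I' J' x' where "topple_step m n x x'" "burning_state m n c I' J' x'"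
    "I' \<subseteq> {1..m}" "J' \<subseteq> {1..n}" "(m - card I') + (n - card J') < (m - card I) + (n - card J)"
proof -
  have fin: "finite I" "finite J"
    using assms(2,3) finite_subset by auto
  have "{1..m} - I \<noteq> {} \<or> {1..n} - J \<noteq> {}"
    using assms(2-4) by blast
  then have "(\<exists>i\<in>{1..m} - I. card ({1..n} - J) \<le> c (T i)) \<or>
      (\<exists>j\<in>{1..n} - J. card ({1..m} - I) \<le> c (B j))"
    using no_forbidden_subconfigD[OF assms(1), of "{1..m} - I" "{1..n} - J"] by blast
  moreover have "card ({1..m} - I) = m - card I" "card ({1..n} - J) = n - card J"
    using assms(2,3) fin by (simp_all add: card_Diff_subset)
  ultimately consider
      (top) i where "i \<in> {1..m} - I" "n - card J \<le> c (T i)"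
    | (bottom) j where "j \<in> {1..n} - J" "m - card I \<le> c (B j)"
    by metis
  then show ?thesis
  proof cases
    case top
    have "insert i I \<subseteq> {1..m}"
      using assms(2) top(1) by blast
    moreover from this have "m - card (insert i I) < m - card I"
      using fin(1) top(1) card_mono[of "{1..m}" "insert i I"] by simp
    ultimately show ?thesis
      using that burning_state_topple_T[OF assms(5) fin(1) top] assms(3) by simp
  next
    case bottom
    have "insert j J \<subseteq> {1..n}"
      using assms(3) bottom(1) by blast
    moreover from this have "n - card (insert j J) < n - card J"
      using fin(2) bottom(1) card_mono[of "{1..n}" "insert j J"] by simp
    ultimately show ?thesis
      using that burning_state_topple_B[OF assms(5) fin(2) bottom] assms(2) by simp
  qed
qed

lemma burning_state_topple_steps:
  assumes "no_forbidden_subconfig m n c" "valid_cfg m n c"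
  shows "I \<subseteq> {1..m} \<Longrightarrow> J \<subseteq> {1..n} \<Longrightarrow> burning_state m n c I J x \<Longrightarrow> (topple_step m n)\<^sup>*\<^sup>* x c"
proof (induction "(m - card I) + (n - card J)" arbitrary: I J x rule: less_induct)
  case less
  show ?case
  proof (cases "I = {1..m} \<and> J = {1..n}")
    case True
    then show ?thesis
      using burning_state_complete assms(2) less.prems(3) by auto
  next
    case False
    obtain I' J' x' where step: "topple_step m n x x'" and burning: "burning_state m n c I' J' x'"
      and "I' \<subseteq> {1..m}" "J' \<subseteq> {1..n}" "(m - card I') + (n - card J') < (m - card I) + (n - card J)"
      by (rule burning_state_progress[OF assms(1) less.prems(1,2) False less.prems(3)])
    then have "(topple_step m n)\<^sup>*\<^sup>* x' c"
      using less.hyps burning by blast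
    with step show ?thesis
      by (meson converse_rtranclp_into_rtranclp)
  qed
qed

lemma sink_grains_topple_steps:
  assumes "no_forbidden_subconfig m n c" "valid_cfg m n c"
  shows "(topple_step m n)\<^sup>*\<^sup>* (c + sink_grains n k) c"
proof (induction k)
  case 0
  have "c + sink_grains n 0 = c"
    by (auto simp: sink_grains_def plus_fun_def fun_eq_iff split: vtx.split)
  then show ?case by simp
next
  case (Suc k)
  have "(topple_step m n)\<^sup>*\<^sup>* (c + sink_grains n 1) c"
    using burning_state_topple_steps[OF assms] burning_state_start[OF assms(2)] by blast
  then have "(topple_step m n)\<^sup>*\<^sup>* (c + sink_grains n 1 + sink_grains n k) (c + sink_grains n k)"
    by (rule topple_steps_add)
  moreover have "c + sink_grains n 1 + sink_grains n k = c + sink_grains n (Suc k)"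
    by (auto simp: sink_grains_def plus_fun_def fun_eq_iff split: vtx.split)
  ultimately show ?case
    using Suc.IH by (metis rtranclp_trans)
qed

definition degrees :: "nat \<Rightarrow> nat \<Rightarrow> config" where
  "degrees m n = (\<lambda>v. if v \<in> nonsink m n then deg m n v else 0)"

text \<open>Topple each top vertex once.\<close>
lemma degrees_topple_steps:
  "(topple_step m n)\<^sup>*\<^sup>* (c + degrees m n) (c + sink_grains n (2*m+1))"
proof -
  define x where "x k = (\<lambda>v. case v of
      T i \<Rightarrow> if k < i \<and> i \<le> m then c v + n else c v
    | B j \<Rightarrow> if 1 \<le> j \<and> j \<le> n then c v + Suc m + k else c v)" for k
  have "(topple_step m n)\<^sup>*\<^sup>* (x 0) (x k)" if "k \<le> m" for k
    using that
  proof (induction k)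
    case (Suc k)
    have "topple_step m n (x k) (x (Suc k))"
      unfolding topple_step_def
    proof (intro bexI conjI)
      show "deg m n (T (Suc k)) \<le> x k (T (Suc k))"
        using Suc.prems by (simp add: deg_T x_def)
      show "x (Suc k) = topple m n (T (Suc k)) (x k)"
        using Suc.prems by (auto simp: topple_T x_def fun_eq_iff split: vtx.split)
    qed (use Suc.prems in simp)
    with Suc show ?case
      by (meson Suc_leD rtranclp.rtrancl_into_rtrancl)
  qed simp
  moreover have "x 0 = c + degrees m n" "x m = c + sink_grains n (2*m+1)"
    by (auto simp: x_def degrees_def sink_grains_def plus_fun_def deg_T deg_B fun_eq_iff
        split: vtx.split)
  ultimately show ?thesis by (metis order_refl)
qed

lemma no_forbidden_subconfig_det_recurrent:
  assumes "1 \<le> n" "valid_cfg m n c" "stable m n c" "no_forbidden_subconfig m n c"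
  shows "det_recurrent m n c"
proof -
  define a where "a = (\<lambda>v. if v \<in> nonsink m n then Suc (c v) else 0)"
  have "0 < deg m n v" if "v \<in> nonsink m n" for v
    using that assms(1) by (cases v) (auto simp: deg_T deg_B)
  then have "max_stable m n + a = c + degrees m n"
    using assms(2) by (auto simp: a_def max_stable_def degrees_def plus_fun_def fun_eq_iff valid_cfg_def)
  then have "stabilises_to m n (max_stable m n + a) c"
    using degrees_topple_steps sink_grains_topple_steps[OF assms(4,2)] assms(3)
    unfolding stabilises_to_def by (metis rtranclp_trans)
  moreover have "\<forall>v. v \<notin> nonsink m n \<longrightarrow> a v = 0"
    by (simp add: a_def)
  ultimately have "(chain_step m n)\<^sup>*\<^sup>* (max_stable m n) c"
    using chain_steps_to_stabilisation_of_add[OF assms(1) valid_max_stable stable_max_stable[OF assms(1)]]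
    by blast
  then show ?thesis
    using det_recurrent_iff_reachable_from_max_stable assms(1-3) by blast
qed

lemma det_recurrent_iff_no_forbidden_subconfig:
  "1 \<le> n \<Longrightarrow> det_recurrent m n c \<longleftrightarrow> valid_cfg m n c \<and> stable m n c \<and> no_forbidden_subconfig m n c"
  using det_recurrent_no_forbidden_subconfig no_forbidden_subconfig_det_recurrent
    det_recurrent_def by blast

definition tops :: "nat \<Rightarrow> config \<Rightarrow> nat list" where
  "tops m c = map (\<lambda>i. c (T i)) [1..<Suc m]"

definition bottoms :: "nat \<Rightarrow> config \<Rightarrow> nat list" where
  "bottoms n c = map (\<lambda>j. c (B j)) [1..<Suc n]"

lemma length_tops [simp]: "length (tops m c) = m"
  by (simp add: tops_def)

lemma length_bottoms [simp]: "length (bottoms n c) = n"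
  by (simp add: bottoms_def)

lemma nth_tops: "i < m \<Longrightarrow> tops m c ! i = c (T (Suc i))"
  by (simp add: tops_def nth_upt del: upt_Suc)

lemma nth_bottoms: "j < n \<Longrightarrow> bottoms n c ! j = c (B (Suc j))"
  by (simp add: bottoms_def nth_upt del: upt_Suc)

lemma bottoms_Suc: "bottoms (Suc k) c = bottoms k c @ [c (B (Suc k))]"
  by (simp add: bottoms_def)

lemma all_Suc_less_iff: "(\<forall>i. 1 \<le> i \<and> i < m \<longrightarrow> P i) \<longleftrightarrow> (\<forall>i. Suc i < m \<longrightarrow> P (Suc i))"
  by (metis One_nat_def Suc_le_D Suc_le_eq le_add1 plus_1_eq_Suc)

lemma sorted_cfg_iff: "sorted_cfg m n c \<longleftrightarrow> sorted (tops m c) \<and> sorted (bottoms n c)"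
  unfolding sorted_cfg_def sorted_iff_nth_Suc all_Suc_less_iff
  by (simp add: nth_tops nth_bottoms)

lemma stable_iff_lists: "stable m n c \<longleftrightarrow> (\<forall>h\<in>set (tops m c). h < n) \<and> (\<forall>h\<in>set (bottoms n c). h \<le> m)"
  by (auto simp: stable_iff tops_def bottoms_def)

lemma cfg_eqI:
  assumes "valid_cfg m n c" "valid_cfg m n c'" "tops m c = tops m c'" "bottoms n c = bottoms n c'"
  shows "c = c'"
proof
  have eq: "\<forall>i\<in>{1..m}. c (T i) = c' (T i)" "\<forall>j\<in>{1..n}. c (B j) = c' (B j)"
    using assms(3,4) unfolding tops_def bottoms_def map_eq_conv set_upt atLeastLessThanSuc_atLeastAtMost
    by blast+
  fix v
  show "c v = c' v"
  proof (cases "v \<in> nonsink m n")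
    case True
    then show ?thesis
      using eq by (cases v) auto
  next
    case False
    then show ?thesis
      using assms(1,2) unfolding valid_cfg_def by simp
  qed
qed

lemma sorted_cfg_T_mono:
  assumes "sorted_cfg m n c" "1 \<le> i" "i \<le> i'" "i' \<le> m"
  shows "c (T i) \<le> c (T i')"
  using sorted_nth_mono[of "tops m c" "i - 1" "i' - 1"] assms by (simp add: sorted_cfg_iff nth_tops)

lemma sorted_cfg_B_mono:
  assumes "sorted_cfg m n c" "1 \<le> j" "j \<le> j'" "j' \<le> n"
  shows "c (B j) \<le> c (B j')"
  using sorted_nth_mono[of "bottoms n c" "j - 1" "j' - 1"] assms by (simp add: sorted_cfg_iff nth_bottoms)

text \<open>For sorted c: no ({1..p}, {1..q}) is a forbidden subconfiguration.\<close>
definition no_forbidden_corner :: "nat \<Rightarrow> nat \<Rightarrow> config \<Rightarrow> bool" where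
  "no_forbidden_corner m n c \<longleftrightarrow>
     (\<forall>p q. 1 \<le> p \<and> p \<le> m \<and> 1 \<le> q \<and> q \<le> n \<longrightarrow> q \<le> c (T p) \<or> p \<le> c (B q))"

lemma card_le_Max:
  fixes I :: "nat set"
  assumes "finite I" "0 \<notin> I" "I \<noteq> {}"
  shows "card I \<le> Max I"
proof -
  have "I \<subseteq> {1..Max I}"
    using assms by (auto simp: Suc_le_eq intro!: Max_ge)
  then show ?thesis
    using card_mono[of "{1..Max I}" I] by simp
qed

lemma no_forbidden_subconfig_corner:
  assumes "sorted_cfg m n c" "no_forbidden_subconfig m n c"
  shows "no_forbidden_corner m n c"
  unfolding no_forbidden_corner_def
proof (intro allI impI)
  fix p q
  assume pq: "1 \<le> p \<and> p \<le> m \<and> 1 \<le> q \<and> q \<le> n"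
  then have "(\<exists>i\<in>{1..p}. q \<le> c (T i)) \<or> (\<exists>j\<in>{1..q}. p \<le> c (B j))"
    using no_forbidden_subconfigD[OF assms(2), of "{1..p}" "{1..q}"] by auto
  then show "q \<le> c (T p) \<or> p \<le> c (B q)"
    using sorted_cfg_T_mono[OF assms(1)] sorted_cfg_B_mono[OF assms(1)] pq
    by (meson atLeastAtMost_iff le_trans)
qed

text \<open>If (I, J) is forbidden, so is the corner (card I, card J): sortedness gives
  c(T (card I)) \<le> c(T (Max I)) < card J.\<close>
lemma no_forbidden_corner_subconfig:
  assumes sorted: "sorted_cfg m n c" and corner: "no_forbidden_corner m n c"
  shows "no_forbidden_subconfig m n c"
  unfolding no_forbidden_subconfig_def
proof (intro allI notI)
  fix I J
  assume "forbidden_subconfig m n c I J"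
  then have IJ: "I \<subseteq> {1..m}" "J \<subseteq> {1..n}" "I \<noteq> {} \<or> J \<noteq> {}"
    and tops: "\<forall>i\<in>I. c (T i) < card J" and bottoms: "\<forall>j\<in>J. c (B j) < card I"
    unfolding forbidden_subconfig_def by blast+
  have fin: "finite I" "finite J"
    using IJ(1,2) finite_subset by auto
  have "I \<noteq> {}" "J \<noteq> {}"
    using IJ(3) tops bottoms by fastforce+
  moreover have "0 \<notin> I" "0 \<notin> J"
    using IJ(1,2) by auto
  ultimately have I: "Max I \<in> I" "card I \<le> Max I" "1 \<le> card I"
    and J: "Max J \<in> J" "card J \<le> Max J" "1 \<le> card J"
    using fin card_le_Max by (simp_all add: Suc_le_eq card_gt_0_iff)
  have "Max I \<le> m" "Max J \<le> n"
    using I(1) J(1) IJ(1,2) by auto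
  then have "c (T (card I)) < card J" "c (B (card J)) < card I"
    using I J tops bottoms sorted_cfg_T_mono[OF sorted] sorted_cfg_B_mono[OF sorted]
    by (meson le_less_trans)+
  moreover have "card I \<le> m" "card J \<le> n"
    using I J \<open>Max I \<le> m\<close> \<open>Max J \<le> n\<close> by linarith+
  ultimately show False
    using corner I(3) J(3) unfolding no_forbidden_corner_def by (meson not_le)
qed

lemma SDR_iff:
  "1 \<le> n \<Longrightarrow> c \<in> SDR m n \<longleftrightarrow> sorted_cfg m n c \<and> valid_cfg m n c \<and> stable m n c \<and> no_forbidden_corner m n c"
  unfolding SDR_def det_recurrent_iff_no_forbidden_subconfig
  using no_forbidden_subconfig_corner no_forbidden_corner_subconfig by blast

abbreviation nsteps :: "('a \<Rightarrow> bool) \<Rightarrow> 'a list \<Rightarrow> nat" where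
  "nsteps P xs \<equiv> length (filter P xs)"

text \<open>For a lattice path with P marking its E steps, levels P 0 lists the heights of its
  E steps.\<close>
fun levels :: "('a \<Rightarrow> bool) \<Rightarrow> nat \<Rightarrow> 'a list \<Rightarrow> nat list" where
  "levels P k [] = []"
| "levels P k (x # xs) = (if P x then k # levels P k xs else levels P (Suc k) xs)"

lemma length_levels [simp]: "length (levels P k xs) = nsteps P xs"
  by (induction xs arbitrary: k) auto

lemma levels_Suc: "levels P (Suc k) xs = map Suc (levels P k xs)"
  by (induction xs arbitrary: k) auto

lemma levels_map: "levels P k (map f xs) = levels (\<lambda>x. P (f x)) k xs"
  by (induction xs arbitrary: k) auto

lemma levels_bounds: "h \<in> set (levels P k xs) \<Longrightarrow> k \<le> h \<and> h \<le> k + nsteps (\<lambda>x. \<not> P x) xs"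
  by (induction xs arbitrary: k) (auto, fastforce+)

lemma sorted_levels: "sorted (levels P k xs)"
  by (induction xs arbitrary: k) (auto dest: levels_bounds)

lemma nth_levels:
  assumes "a < length xs" "P (xs ! a)"
  shows "nsteps P (take a xs) < nsteps P xs"
    and "levels P k xs ! nsteps P (take a xs) = k + nsteps (\<lambda>x. \<not> P x) (take a xs)"
  using assms
proof (induction xs arbitrary: a k)
  case (Cons x xs)
  { case 1 then show ?case using Cons.IH(1) by (cases a) auto }
  { case 2 then show ?case using Cons.IH(2) by (cases a) auto }
qed simp_all

lemma ex_nth_nsteps_take:
  "i < nsteps P xs \<Longrightarrow> \<exists>a<length xs. P (xs ! a) \<and> nsteps P (take a xs) = i"
proof (induction xs arbitrary: i)
  case (Cons x xs)
  show ?case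
  proof (cases "P x \<and> i = 0")
    case True
    then show ?thesis by force
  next
    case False
    then have "(if P x then i - 1 else i) < nsteps P xs"
      using Cons.prems by auto
    then obtain a where "a < length xs" "P (xs ! a)" "nsteps P (take a xs) = (if P x then i - 1 else i)"
      using Cons.IH by blast
    then show ?thesis
      using False by (intro exI[of _ "Suc a"]) auto
  qed
qed simp

lemma nsteps_take_less:
  assumes "a < j" "j \<le> length xs" "P (xs ! a)"
  shows "nsteps P (take a xs) < nsteps P (take j xs)"
proof -
  obtain d where "j = Suc a + d"
    using assms(1) less_imp_Suc_add by blast
  then have "take j xs = take (Suc a) xs @ take d (drop (Suc a) xs)"
    by (simp only: take_add)
  moreover have "take (Suc a) xs = take a xs @ [xs ! a]"
    using assms by (simp add: take_Suc_conv_app_nth)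
  ultimately show ?thesis
    using assms(3) by simp
qed

lemma positions_Cons:
  "positions P (x # xs) = (if P x then 0 # map Suc (positions P xs) else map Suc (positions P xs))"
proof -
  have "[0..<length (x # xs)] = 0 # map Suc [0..<length xs]"
    by (simp add: upt_conv_Cons map_Suc_upt del: upt_Suc)
  then show ?thesis
    unfolding positions_def by (simp add: filter_map comp_def)
qed

lemma length_positions: "length (positions P xs) = nsteps P xs"
  by (induction xs) (simp add: positions_def, simp add: positions_Cons)

lemma levels_eq_count_before_positions:
  assumes "\<And>x. Q x \<longleftrightarrow> \<not> P x"
  shows "levels P k xs = map (\<lambda>j. k + count_before Q xs j) (positions P xs)"
proof (induction xs arbitrary: k)
  case (Cons x xs)
  then show ?case
    using assms[of x] by (auto simp: positions_Cons count_before_def comp_def)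
qed (simp add: positions_def)

section \<open>The configuration of a Motzkin path\<close>

text \<open>The steps of the upper and lower boundary paths that \<open>xi_step\<close> turns into s.\<close>
fun upper :: "mstep \<Rightarrow> dir" where
  "upper MU = dN" | "upper MHN = dN" | "upper MD = dE" | "upper MHE = dE"

fun lower :: "mstep \<Rightarrow> dir" where
  "lower MU = dE" | "lower MHE = dE" | "lower MD = dN" | "lower MHN = dN"

lemma xi_step_upper_lower [simp]: "xi_step (upper s) (lower s) = s"
  by (cases s) simp_all

lemma upper_xi_step [simp]: "upper (xi_step u l) = u"
  and lower_xi_step [simp]: "lower (xi_step u l) = l"
  by (cases u; cases l; simp)+

lemma dir_neq_iff [simp]: "d \<noteq> dE \<longleftrightarrow> d = dN" "d \<noteq> dN \<longleftrightarrow> d = dE"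
  by (cases d; simp)+

lemma step_classes:
  "(\<lambda>s. s = MD \<or> s = MHE) = (\<lambda>s. upper s = dE)"
  "(\<lambda>s. s = MU \<or> s = MHN) = (\<lambda>s. upper s = dN)"
  "(\<lambda>s. s = MD \<or> s = MHN) = (\<lambda>s. lower s = dN)"
  "(\<lambda>s. s = MU \<or> s = MHE) = (\<lambda>s. lower s = dE)"
  by (simp_all add: fun_eq_iff) (metis lower.simps upper.simps mstep.exhaust dir.distinct)+

lemma height_eq_lower_upper:
  "height w = int (nsteps (\<lambda>s. lower s = dE) w) - int (nsteps (\<lambda>s. upper s = dE) w)"
proof (induction w)
  case (Cons s w)
  then show ?case by (cases s) (simp_all add: height_def)
qed (simp add: height_def)

lemma height_eq_upper_lower:
  "height w = int (nsteps (\<lambda>s. upper s = dN) w) - int (nsteps (\<lambda>s. lower s = dN) w)"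
proof (induction w)
  case (Cons s w)
  then show ?case by (cases s) (simp_all add: height_def)
qed (simp add: height_def)

lemma nsteps_dir_compl:
  fixes f :: "'a \<Rightarrow> dir"
  shows "nsteps (\<lambda>x. f x = dE) xs + nsteps (\<lambda>x. f x = dN) xs = length xs"
  using sum_length_filter_compl[of "\<lambda>x. f x = dE" xs] by simp

lemma Motz_nsteps:
  assumes "w \<in> Motz m k"
  shows "length w = m + k"
    and "nsteps (\<lambda>s. upper s = dE) w = m" "nsteps (\<lambda>s. upper s = dN) w = k"
    and "nsteps (\<lambda>s. lower s = dE) w = m" "nsteps (\<lambda>s. lower s = dN) w = k"
proof -
  show len: "length w = m + k" and lower: "nsteps (\<lambda>s. lower s = dE) w = m"
    using assms by (simp_all add: Motz_def step_classes)
  moreover have "height w = 0"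
    using assms by (simp add: Motz_def)
  ultimately show upper: "nsteps (\<lambda>s. upper s = dE) w = m"
    using height_eq_lower_upper[of w] by simp
  show "nsteps (\<lambda>s. upper s = dN) w = k" "nsteps (\<lambda>s. lower s = dN) w = k"
    using nsteps_dir_compl[of upper w] nsteps_dir_compl[of lower w] len lower upper by simp_all
qed

lemma valid_cfg_of: "1 \<le> n \<Longrightarrow> valid_cfg m n (cfg_of m n w)"
  by (simp add: valid_cfg_iff cfg_of_def)

lemma tops_cfg_of:
  assumes "nsteps (\<lambda>s. upper s = dE) w = m"
  shows "tops m (cfg_of m n w) = levels (\<lambda>s. upper s = dE) 0 w"
proof -
  let ?pos = "positions (\<lambda>s. upper s = dE) w" and ?cnt = "count_before (\<lambda>s. upper s = dN) w"
  have "tops m (cfg_of m n w) = map (\<lambda>i. ?cnt (?pos ! (i - 1))) [1..<Suc m]"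
    unfolding tops_def by (intro map_cong) (auto simp: cfg_of_def step_classes)
  also have "\<dots> = map ?cnt ?pos"
    using assms by (intro nth_equalityI) (simp_all add: length_positions nth_upt del: upt_Suc)
  also have "\<dots> = levels (\<lambda>s. upper s = dE) 0 w"
    by (simp add: levels_eq_count_before_positions)
  finally show ?thesis .
qed

lemma bottoms_cfg_of:
  assumes "1 \<le> n" "nsteps (\<lambda>s. lower s = dN) w = n - 1"
  shows "bottoms n (cfg_of m n w) = levels (\<lambda>s. lower s = dN) 0 w @ [m]"
proof -
  let ?pos = "positions (\<lambda>s. lower s = dN) w" and ?cnt = "count_before (\<lambda>s. lower s = dE) w"
  have "[1..<Suc n] = [1..<Suc (n - 1)] @ [n]"
    using assms(1) by simp
  then have "bottoms n (cfg_of m n w) = map (\<lambda>j. cfg_of m n w (B j)) [1..<Suc (n - 1)] @ [m]"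
    unfolding bottoms_def by (simp add: cfg_of_def)
  also have "map (\<lambda>j. cfg_of m n w (B j)) [1..<Suc (n - 1)] = map (\<lambda>j. ?cnt (?pos ! (j - 1))) [1..<Suc (n - 1)]"
    by (intro map_cong) (auto simp: cfg_of_def step_classes)
  also have "map (\<lambda>j. ?cnt (?pos ! (j - 1))) [1..<Suc (n - 1)] = map ?cnt ?pos"
    using assms by (intro nth_equalityI) (simp_all add: length_positions nth_upt del: upt_Suc)
  also have "\<dots> = levels (\<lambda>s. lower s = dN) 0 w"
    by (simp add: levels_eq_count_before_positions)
  finally show ?thesis .
qed

lemma cfg_of_T:
  assumes "nsteps (\<lambda>s. upper s = dE) w = m" "a < length w" "upper (w ! a) = dE"
  shows "nsteps (\<lambda>s. upper s = dE) (take a w) < m"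
    and "cfg_of m n w (T (Suc (nsteps (\<lambda>s. upper s = dE) (take a w)))) =
      nsteps (\<lambda>s. upper s = dN) (take a w)"
proof -
  let ?i = "nsteps (\<lambda>s. upper s = dE) (take a w)"
  show i: "?i < m"
    using nth_levels(1)[of a w "\<lambda>s. upper s = dE"] assms by simp
  have "cfg_of m n w (T (Suc ?i)) = tops m (cfg_of m n w) ! ?i"
    using i by (simp add: nth_tops)
  also have "\<dots> = nsteps (\<lambda>s. upper s = dN) (take a w)"
    using tops_cfg_of[of w m n] nth_levels(2)[of a w "\<lambda>s. upper s = dE" 0] assms by simp
  finally show "cfg_of m n w (T (Suc ?i)) = nsteps (\<lambda>s. upper s = dN) (take a w)" .
qed

lemma cfg_of_B:
  assumes "1 \<le> n" "nsteps (\<lambda>s. lower s = dN) w = n - 1" "a < length w" "lower (w ! a) = dN"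
  shows "Suc (nsteps (\<lambda>s. lower s = dN) (take a w)) < n"
    and "cfg_of m n w (B (Suc (nsteps (\<lambda>s. lower s = dN) (take a w)))) =
      nsteps (\<lambda>s. lower s = dE) (take a w)"
proof -
  let ?j = "nsteps (\<lambda>s. lower s = dN) (take a w)"
  have j: "?j < n - 1"
    using nth_levels(1)[of a w "\<lambda>s. lower s = dN"] assms by simp
  then show "Suc ?j < n"
    by simp
  have "cfg_of m n w (B (Suc ?j)) = bottoms n (cfg_of m n w) ! ?j"
    using j by (simp add: nth_bottoms)
  also have "\<dots> = levels (\<lambda>s. lower s = dN) 0 w ! ?j"
    using bottoms_cfg_of[of n w m] assms(1,2) j by (simp add: nth_append)
  also have "\<dots> = nsteps (\<lambda>s. lower s = dE) (take a w)"
    using nth_levels(2)[of a w "\<lambda>s. lower s = dN" 0] assms(3,4) by simp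
  finally show "cfg_of m n w (B (Suc ?j)) = nsteps (\<lambda>s. lower s = dE) (take a w)" .
qed

lemma cfg_of_B_last: "1 \<le> n \<Longrightarrow> cfg_of m n w (B n) = m"
  by (simp add: cfg_of_def)

lemma sorted_stable_cfg_of:
  assumes "1 \<le> n" "w \<in> Motz m (n - 1)"
  shows "sorted_cfg m n (cfg_of m n w)" "stable m n (cfg_of m n w)"
proof -
  note counts = Motz_nsteps[OF assms(2)]
  have "\<forall>h\<in>set (levels (\<lambda>s. upper s = dE) 0 w). h \<le> n - 1"
    "\<forall>h\<in>set (levels (\<lambda>s. lower s = dN) 0 w). h \<le> m"
    using levels_bounds counts by fastforce+
  then show "sorted_cfg m n (cfg_of m n w)" "stable m n (cfg_of m n w)"
    using assms(1) counts tops_cfg_of bottoms_cfg_of sorted_levels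
    by (auto simp: sorted_cfg_iff stable_iff_lists sorted_append)
qed

lemma length_take_eq_nsteps:
  fixes f :: "'a \<Rightarrow> dir"
  assumes "a \<le> length xs"
  shows "a = nsteps (\<lambda>x. f x = dE) (take a xs) + nsteps (\<lambda>x. f x = dN) (take a xs)"
  using nsteps_dir_compl[of f "take a xs"] assms by simp

lemma position_upper_E:
  assumes "nsteps (\<lambda>s. upper s = dE) w = m" "1 \<le> p" "p \<le> m"
  obtains a where "a < length w" "upper (w ! a) = dE" "nsteps (\<lambda>s. upper s = dE) (take a w) = p - 1"
    "a = p - 1 + cfg_of m n w (T p)"
proof -
  have "p - 1 < nsteps (\<lambda>s. upper s = dE) w"
    using assms by linarith
  then obtain a where a: "a < length w" "upper (w ! a) = dE" "nsteps (\<lambda>s. upper s = dE) (take a w) = p - 1"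
    using ex_nth_nsteps_take by blast
  moreover have "a = p - 1 + cfg_of m n w (T p)"
    using cfg_of_T(2)[OF assms(1) a(1,2), of n] a(3) length_take_eq_nsteps[of a w upper] a(1) assms(2)
    by simp
  ultimately show ?thesis
    using that by blast
qed

lemma position_lower_N:
  assumes "1 \<le> n" "nsteps (\<lambda>s. lower s = dN) w = n - 1" "1 \<le> q" "q < n"
  obtains b where "b < length w" "lower (w ! b) = dN" "nsteps (\<lambda>s. lower s = dN) (take b w) = q - 1"
    "b = q - 1 + cfg_of m n w (B q)"
proof -
  have "q - 1 < nsteps (\<lambda>s. lower s = dN) w"
    using assms by linarith
  then obtain b where b: "b < length w" "lower (w ! b) = dN" "nsteps (\<lambda>s. lower s = dN) (take b w) = q - 1"
    using ex_nth_nsteps_take by blast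
  moreover have "b = q - 1 + cfg_of m n w (B q)"
    using cfg_of_B(2)[OF assms(1,2) b(1,2), of m] b(3) length_take_eq_nsteps[of b w lower] b(1) assms(3)
    by simp
  ultimately show ?thesis
    using that by blast
qed

text \<open>If c(T p) < q and c(B q) < p, then among the first p + q - 1 steps of w the upper path
  makes p E steps and the lower path q N steps, so the upper path is strictly to the right.\<close>
lemma Motz_no_forbidden_corner:
  assumes n: "1 \<le> n" and w: "w \<in> Motz m (n - 1)"
  shows "no_forbidden_corner m n (cfg_of m n w)"
  unfolding no_forbidden_corner_def
proof (intro allI impI)
  fix p q
  assume pq: "1 \<le> p \<and> p \<le> m \<and> 1 \<le> q \<and> q \<le> n"
  let ?c = "cfg_of m n w"
  note counts = Motz_nsteps[OF w]
  show "q \<le> ?c (T p) \<or> p \<le> ?c (B q)"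
  proof (rule ccontr)
    assume "\<not> (q \<le> ?c (T p) \<or> p \<le> ?c (B q))"
    then have cT: "?c (T p) < q" and cB: "?c (B q) < p"
      by auto
    then have "q < n"
      using cfg_of_B_last[OF n, of m w] pq by (cases "q = n") auto
    obtain a where a: "upper (w ! a) = dE" "nsteps (\<lambda>s. upper s = dE) (take a w) = p - 1"
      "a = p - 1 + ?c (T p)"
      using position_upper_E[OF counts(2), of p n] pq by blast
    obtain b where b: "lower (w ! b) = dN" "nsteps (\<lambda>s. lower s = dN) (take b w) = q - 1"
      "b = q - 1 + ?c (B q)"
      using position_lower_N[OF n counts(5), of q m] pq \<open>q < n\<close> by blast
    define j where "j = p + q - 1"
    have "a < j" "b < j" "j \<le> length w"
      using a(3) b(3) cT cB pq counts(1) \<open>q < n\<close> by (auto simp: j_def)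
    then have "p \<le> nsteps (\<lambda>s. upper s = dE) (take j w)" "q \<le> nsteps (\<lambda>s. lower s = dN) (take j w)"
      using nsteps_take_less[of a j w "\<lambda>s. upper s = dE"] nsteps_take_less[of b j w "\<lambda>s. lower s = dN"]
        a b pq by linarith+
    moreover have "j = nsteps (\<lambda>s. lower s = dE) (take j w) + nsteps (\<lambda>s. lower s = dN) (take j w)"
      using length_take_eq_nsteps[of j w lower] \<open>j \<le> length w\<close> .
    ultimately have "height (take j w) < 0"
      using height_eq_lower_upper[of "take j w"] pq unfolding j_def by linarith
    moreover have "0 \<le> height (take j w)"
      using w \<open>j \<le> length w\<close> by (simp add: Motz_def)
    ultimately show False
      by simp
  qed
qed

lemma height_take_Suc: "j < length w \<Longrightarrow> height (take (Suc j) w) = height (take j w) + hstep (w ! j)"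
  by (simp add: take_Suc_conv_app_nth height_def)

text \<open>At the first step going below the axis, a D step at height 0, the upper path makes its
  p-th E step and the lower path its q-th N step with c(T p) = q - 1 and c(B q) = p - 1.\<close>
lemma no_forbidden_corner_height_nonneg:
  assumes n: "1 \<le> n"
    and counts: "nsteps (\<lambda>s. upper s = dE) w = m" "nsteps (\<lambda>s. lower s = dN) w = n - 1"
    and corner: "no_forbidden_corner m n (cfg_of m n w)"
  shows "j \<le> length w \<Longrightarrow> 0 \<le> height (take j w)"
proof (induction j)
  case (Suc j)
  let ?xs = "take j w" and ?c = "cfg_of m n w"
  have j: "j < length w"
    using Suc.prems by simp
  show ?case
  proof (rule ccontr)
    assume "\<not> 0 \<le> height (take (Suc j) w)"
    then have "height ?xs + hstep (w ! j) < 0"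
      using height_take_Suc[OF j] by simp
    then have "height ?xs = 0" and "w ! j = MD"
      using Suc.IH j by (cases "w ! j"; simp)+
    define p where "p = Suc (nsteps (\<lambda>s. upper s = dE) ?xs)"
    define q where "q = Suc (nsteps (\<lambda>s. lower s = dN) ?xs)"
    have "p \<le> m" "?c (T p) = nsteps (\<lambda>s. upper s = dN) ?xs"
      using cfg_of_T(1)[OF counts(1) j] cfg_of_T(2)[OF counts(1) j, of n] \<open>w ! j = MD\<close>
      unfolding p_def by simp_all
    moreover have "q < n" "?c (B q) = nsteps (\<lambda>s. lower s = dE) ?xs"
      using cfg_of_B(1)[OF n counts(2) j] cfg_of_B(2)[OF n counts(2) j, of m] \<open>w ! j = MD\<close>
      unfolding q_def by simp_all
    moreover have "?c (T p) < q" "?c (B q) < p"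
      using \<open>height ?xs = 0\<close> height_eq_lower_upper[of ?xs] height_eq_upper_lower[of ?xs]
        calculation unfolding p_def q_def by simp_all
    ultimately show False
      using corner[unfolded no_forbidden_corner_def, rule_format, of p q] unfolding p_def q_def
      by linarith
  qed
qed (simp add: height_def)

section \<open>Parallelogram polyominoes\<close>

definition paths_of :: "mstep list \<Rightarrow> dir list \<times> dir list" where
  "paths_of w = (dN # map upper w @ [dE], dE # map lower w @ [dN])"

lemma Xi_paths_of: "Xi (paths_of w) = w"
proof -
  have "map (\<lambda>(u, l). xi_step u l) (zip (map upper w) (map lower w)) = w"
    by (induction w) auto
  then show ?thesis
    unfolding Xi_def paths_of_def by simp
qed

lemma path_at_shift: "k < h \<Longrightarrow> path_at b a k (h # hs) tp = b # path_at b a (Suc k) (h # hs) tp"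
  by (simp add: Suc_diff_Suc replicate_Suc[symmetric] del: replicate_Suc)

lemma path_at_levels:
  "path_at b a k (levels P k xs @ [k + nsteps (\<lambda>x. \<not> P x) xs]) (k + nsteps (\<lambda>x. \<not> P x) xs)
     = map (\<lambda>x. if P x then a else b) xs @ [a]"
proof (induction xs arbitrary: k)
  case (Cons x xs)
  show ?case
  proof (cases "P x")
    case True
    then show ?thesis using Cons[of k] by simp
  next
    case False
    let ?t = "Suc k + nsteps (\<lambda>x. \<not> P x) xs"
    have "path_at b a k (levels P (Suc k) xs @ [?t]) ?t = b # path_at b a (Suc k) (levels P (Suc k) xs @ [?t]) ?t"
    proof (cases "levels P (Suc k) xs")
      case Nil
      then show ?thesis using path_at_shift[of k ?t b a "[]" ?t] by simp
    next
      case (Cons h hs)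
      then have "Suc k \<le> h"
        using levels_bounds[of h P "Suc k" xs] by simp
      then show ?thesis
        using Cons path_at_shift[of k h b a "hs @ [?t]" ?t] by simp
    qed
    then show ?thesis
      using Cons[of "Suc k"] False by simp
  qed
qed simp

lemma path_at_levels_from_1:
  "path_at b a 0 (levels P 1 xs @ [Suc (nsteps (\<lambda>x. \<not> P x) xs)]) (Suc (nsteps (\<lambda>x. \<not> P x) xs))
     = b # map (\<lambda>x. if P x then a else b) xs @ [a]"
proof -
  let ?t = "Suc (nsteps (\<lambda>x. \<not> P x) xs)"
  have "path_at b a 0 (levels P 1 xs @ [?t]) ?t = b # path_at b a 1 (levels P 1 xs @ [?t]) ?t"
  proof (cases "levels P 1 xs")
    case Nil
    then show ?thesis using path_at_shift[of 0 ?t b a "[]" ?t] by simp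
  next
    case (Cons h hs)
    then have "1 \<le> h"
      using levels_bounds[of h P 1 xs] by simp
    then show ?thesis
      using Cons path_at_shift[of 0 h b a "hs @ [?t]" ?t] by simp
  qed
  also have "\<dots> = b # map (\<lambda>x. if P x then a else b) xs @ [a]"
    using path_at_levels[of b a 1 P xs] by simp
  finally show ?thesis .
qed

lemma Phi_eq:
  "Phi m n c = (path_at dN dE 0 (map Suc (tops m c) @ [n]) n, path_at dE dN 0 (map Suc (bottoms n c)) (m + 1))"
  by (simp add: Phi_def tops_def bottoms_def comp_def)

lemma Phi_cfg_of:
  assumes "1 \<le> n" "w \<in> Motz m (n - 1)"
  shows "Phi m n (cfg_of m n w) = paths_of w"
proof -
  note counts = Motz_nsteps[OF assms(2)]
  have "map Suc (tops m (cfg_of m n w)) @ [n] = levels (\<lambda>s. upper s = dE) 1 w @ [Suc (nsteps (\<lambda>s. upper s = dN) w)]"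
    using tops_cfg_of[OF counts(2)] counts(3) assms(1) by (simp add: levels_Suc[where k=0, symmetric])
  moreover have "map Suc (bottoms n (cfg_of m n w)) = levels (\<lambda>s. lower s = dN) 1 w @ [Suc (nsteps (\<lambda>s. lower s = dE) w)]"
    using bottoms_cfg_of[OF assms(1) counts(5)] counts(4) by (simp add: levels_Suc[where k=0, symmetric])
  moreover have "map (\<lambda>s. if upper s = dE then dE else dN) w = map upper w"
    "map (\<lambda>s. if lower s = dN then dN else dE) w = map lower w"
    by (simp_all add: map_eq_conv)
  ultimately show ?thesis
    unfolding Phi_eq paths_of_def
    using path_at_levels_from_1[of dN dE "\<lambda>s. upper s = dE" w] path_at_levels_from_1[of dE dN "\<lambda>s. lower s = dN" w]
      counts(3,4) assms(1) by simp
qed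

lemma lpt_sum: "fst (lpt p k) + snd (lpt p k) = min k (length p)"
  unfolding lpt_def using nsteps_dir_compl[of "\<lambda>d. d" "take k p"] by simp

lemma lpt_in_lpts: "k \<le> length p \<Longrightarrow> lpt p k \<in> lpts p"
  unfolding lpts_def by blast

lemma lpt_length: "lpt p (length p) = (nsteps (\<lambda>d. d = dE) p, nsteps (\<lambda>d. d = dN) p)"
  by (simp add: lpt_def)

lemma fst_lpt_Suc: "fst (lpt p k) \<le> fst (lpt p (Suc k)) \<and> fst (lpt p (Suc k)) \<le> Suc (fst (lpt p k))"
  by (cases "k < length p") (auto simp: lpt_def take_Suc_conv_app_nth)

lemma take_Cons_append: "1 \<le> k \<Longrightarrow> k \<le> Suc (length ys) \<Longrightarrow> take k (x # ys @ [z]) = x # take (k - 1) ys"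
  by (cases k) auto

lemma fst_lpt_paths_of:
  assumes "1 \<le> k" "k \<le> Suc (length w)"
  shows "fst (lpt (fst (paths_of w)) k) = nsteps (\<lambda>s. upper s = dE) (take (k - 1) w)"
    and "fst (lpt (snd (paths_of w)) k) = Suc (nsteps (\<lambda>s. lower s = dE) (take (k - 1) w))"
  using assms take_Cons_append[of k "map upper w" dN dE] take_Cons_append[of k "map lower w" dE dN]
  by (simp_all add: lpt_def paths_of_def take_map filter_map comp_def)

text \<open>Strictly between the endpoints the lower path is height-many E steps ahead of the
  upper one, plus one.\<close>
lemma fst_lpt_paths_of_less:
  assumes "w \<in> Motz m k" "0 < i" "i < length (fst (paths_of w))"
  shows "fst (lpt (fst (paths_of w)) i) < fst (lpt (snd (paths_of w)) i)"
proof -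
  have i: "1 \<le> i" "i \<le> Suc (length w)"
    using assms(2,3) by (auto simp: paths_of_def)
  then have "0 \<le> height (take (i - 1) w)"
    using assms(1) by (simp add: Motz_def)
  then show ?thesis
    using fst_lpt_paths_of[OF i] height_eq_lower_upper[of "take (i - 1) w"] by simp
qed

lemma paths_of_in_Polys:
  assumes "1 \<le> n" "w \<in> Motz m (n - 1)"
  shows "paths_of w \<in> Polys m n"
proof -
  note counts = Motz_nsteps[OF assms(2)]
  let ?U = "fst (paths_of w)" and ?L = "snd (paths_of w)" and ?N = "m + 1 + n"
  have len: "length ?U = ?N" "length ?L = ?N"
    using counts(1) assms(1) by (simp_all add: paths_of_def)
  have ends: "lpt ?U ?N = (m + 1, n)" "lpt ?L ?N = (m + 1, n)"
    using len lpt_length[of ?U] lpt_length[of ?L] counts assms(1)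
    by (simp_all add: paths_of_def filter_map comp_def)
  have "z \<in> {(0, 0), (m + 1, n)}" if common: "z \<in> lpts ?U \<inter> lpts ?L" for z
  proof -
    obtain k k' where z: "z = lpt ?U k" "k \<le> ?N" "z = lpt ?L k'" "k' \<le> ?N"
      using common unfolding lpts_def len by blast
    then have "k' = k"
      using lpt_sum[of ?U k] lpt_sum[of ?L k'] len by simp
    then have "k = 0 \<or> k = ?N"
      using z fst_lpt_paths_of_less[OF assms(2), of k] len by fastforce
    then show ?thesis
      using z ends by (auto simp: lpt_def)
  qed
  moreover have "(0, 0) \<in> lpts ?U \<inter> lpts ?L"
    using lpt_in_lpts[of 0 ?U] lpt_in_lpts[of 0 ?L] by (simp add: lpt_def)
  moreover have "(m + 1, n) \<in> lpts ?U \<inter> lpts ?L"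
    using lpt_in_lpts[of ?N ?U] lpt_in_lpts[of ?N ?L] ends len by simp
  ultimately have "lpts ?U \<inter> lpts ?L = {(0, 0), (m + 1, n)}"
    by blast
  moreover have "nsteps (\<lambda>d. d = dE) ?U = m + 1" "nsteps (\<lambda>d. d = dE) ?L = m + 1"
    using counts by (simp_all add: paths_of_def filter_map comp_def)
  ultimately show ?thesis
    using len unfolding Polys_def by (simp add: paths_of_def)
qed

lemma int_walk_stays_positive:
  fixes g :: "nat \<Rightarrow> int"
  assumes step: "\<And>k. \<bar>g (Suc k) - g k\<bar> \<le> 1" and "0 < g a"
    and nonzero: "\<And>k. a \<le> k \<Longrightarrow> k \<le> a + d \<Longrightarrow> g k \<noteq> 0"
  shows "0 < g (a + d)"
  using nonzero
proof (induction d)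
  case (Suc d)
  then have "0 < g (a + d)" and "g (a + Suc d) \<noteq> 0"
    by simp_all
  then show ?case
    using step[of "a + d"] by simp
qed (use assms(2) in simp)

lemma fst_lpt_butlast:
  assumes "p \<noteq> []"
  shows "fst (lpt p (length p - 1)) + (if last p = dE then 1 else 0) = nsteps (\<lambda>d. d = dE) p"
proof -
  have "nsteps (\<lambda>d. d = dE) p = nsteps (\<lambda>d. d = dE) (butlast p @ [last p])"
    using assms by simp
  then show ?thesis
    unfolding lpt_def by (simp add: butlast_conv_take)
qed

lemma Polys_fst_lpt_neq:
  assumes "(U, L) \<in> Polys m n" "0 < k" "k < m + 1 + n"
  shows "fst (lpt U k) \<noteq> fst (lpt L k)"
proof
  assume "fst (lpt U k) = fst (lpt L k)"
  moreover have len: "length U = m + 1 + n" "length L = m + 1 + n"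
    using assms(1) unfolding Polys_def by auto
  ultimately have "lpt U k = lpt L k"
    using lpt_sum[of U k] lpt_sum[of L k] assms(3) by (simp add: prod_eq_iff)
  then have "lpt U k \<in> {(0, 0), (m + 1, n)}"
    using assms lpt_in_lpts[of k U] lpt_in_lpts[of k L] len unfolding Polys_def by auto
  then show False
    using lpt_sum[of U k] len assms(2,3) by auto
qed

text \<open>The x-distance from the upper to the lower path is 1 after the first step and
  never 0 before the last one, so it stays positive; hence the lower path ends with N,
  the upper one with E.\<close>
lemma Polys_end_steps:
  assumes "1 \<le> n" "(U, L) \<in> Polys m n"
  shows "hd L = dE" "last U = dE" "last L = dN"
proof -
  let ?N = "m + 1 + n"
  have len: "length U = ?N" "length L = ?N"
    and E: "nsteps (\<lambda>d. d = dE) U = m + 1" "nsteps (\<lambda>d. d = dE) L = m + 1" and hU: "hd U = dN"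
    using assms(2) unfolding Polys_def by auto
  define gap where "gap k = int (fst (lpt L k)) - int (fst (lpt U k))" for k
  have gap_nonzero: "gap k \<noteq> 0" if "0 < k" "k < ?N" for k
    using Polys_fst_lpt_neq[OF assms(2) that] by (simp add: gap_def)
  have "lpt U 1 = (0, 1)"
    using hU len by (cases U) (auto simp: lpt_def)
  moreover have "lpt L 1 = (if hd L = dE then (1, 0) else (0, 1))"
    using len by (cases L) (auto simp: lpt_def)
  ultimately have "hd L = dE" and "0 < gap 1"
    using gap_nonzero[of 1] assms(1) by (auto simp: gap_def split: if_splits)
  then show "hd L = dE"
    by simp
  have "\<bar>gap (Suc k) - gap k\<bar> \<le> 1" for k
    using fst_lpt_Suc[of U k] fst_lpt_Suc[of L k] by (auto simp: gap_def)
  then have "0 < gap (1 + (?N - 2))"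
    using \<open>0 < gap 1\<close> gap_nonzero by (rule int_walk_stays_positive) (use assms(1) in auto)
  moreover have "1 + (?N - 2) = ?N - 1"
    using assms(1) by simp
  ultimately have "0 < gap (?N - 1)"
    by simp
  moreover have "fst (lpt U (?N - 1)) + (if last U = dE then 1 else 0) = m + 1"
    "fst (lpt L (?N - 1)) + (if last L = dE then 1 else 0) = m + 1"
    using fst_lpt_butlast[of U] fst_lpt_butlast[of L] len E by force+
  ultimately show "last U = dE" "last L = dN"
    unfolding gap_def by (cases "last U"; cases "last L"; auto)+
qed

lemma hd_butlast_tl_last: "2 \<le> length xs \<Longrightarrow> xs = hd xs # butlast (tl xs) @ [last xs]"
  by (cases xs) auto

lemma Polys_paths_of_Xi:
  assumes "1 \<le> n" "P \<in> Polys m n"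
  shows "paths_of (Xi P) = P"
proof -
  obtain U L where P: "P = (U, L)"
    by fastforce
  have "length U = m + 1 + n" "length L = m + 1 + n" "hd U = dN"
    using assms(2) unfolding P Polys_def by auto
  then have UL: "U = dN # butlast (tl U) @ [dE]" "L = dE # butlast (tl L) @ [dN]"
    and "length (butlast (tl U)) = length (butlast (tl L))"
    using Polys_end_steps[OF assms(1) assms(2)[unfolded P]] hd_butlast_tl_last[of U]
      hd_butlast_tl_last[of L] assms(1) by auto
  then have "map upper (Xi P) = butlast (tl U)" "map lower (Xi P) = butlast (tl L)"
    unfolding Xi_def P by (simp_all add: comp_def case_prod_unfold)
  then show ?thesis
    using UL unfolding paths_of_def P by simp
qed

lemma inj_on_Xi_Polys: "1 \<le> n \<Longrightarrow> inj_on Xi (Polys m n)"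
  by (metis Polys_paths_of_Xi inj_onI)

lemma cfg_of_in_SDR:
  assumes "1 \<le> n" "w \<in> Motz m (n - 1)"
  shows "cfg_of m n w \<in> SDR m n"
  using SDR_iff[OF assms(1)] sorted_stable_cfg_of[OF assms] valid_cfg_of[OF assms(1)]
    Motz_no_forbidden_corner[OF assms] by blast

lemma Motz_if_no_forbidden_corner:
  assumes "1 \<le> n" "length w = m + (n - 1)"
    and "nsteps (\<lambda>s. upper s = dE) w = m" "nsteps (\<lambda>s. lower s = dE) w = m"
    "nsteps (\<lambda>s. lower s = dN) w = n - 1"
    and "no_forbidden_corner m n (cfg_of m n w)"
  shows "w \<in> Motz m (n - 1)"
  using assms no_forbidden_corner_height_nonneg[OF assms(1,3,5,6)] height_eq_lower_upper[of w]
  unfolding Motz_def by (simp add: step_classes)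

lemma levels_replicate: "\<not> P b \<Longrightarrow> levels P k (replicate r b @ xs) = levels P (k + r) xs"
  by (induction r arbitrary: k) auto

lemma levels_path_at:
  assumes "a \<noteq> b"
  shows "sorted hs \<Longrightarrow> \<forall>h\<in>set hs. k \<le> h \<and> h \<le> tp \<Longrightarrow> k \<le> tp \<Longrightarrow>
    levels (\<lambda>d. d = a) k (path_at b a k hs tp) = hs \<and>
    nsteps (\<lambda>d. d = a) (path_at b a k hs tp) = length hs \<and>
    nsteps (\<lambda>d. d = b) (path_at b a k hs tp) = tp - k"
proof (induction hs arbitrary: k)
  case Nil
  then show ?case
    using assms levels_replicate[of "\<lambda>d. d = a" b k "tp - k" "[]"] by simp
next
  case (Cons h hs)
  then have "k \<le> h" "h \<le> tp"
    by auto
  moreover have "levels (\<lambda>d. d = a) h (path_at b a h hs tp) = hs \<and>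
    nsteps (\<lambda>d. d = a) (path_at b a h hs tp) = length hs \<and>
    nsteps (\<lambda>d. d = b) (path_at b a h hs tp) = tp - h"
    using Cons by auto
  ultimately show ?case
    using assms levels_replicate[of "\<lambda>d. d = a" b k "h - k"] by auto
qed

lemma ex_word_with_levels:
  assumes "sorted ts" "length ts = m" "\<forall>h\<in>set ts. h \<le> n - 1"
    and "sorted bs" "length bs = n - 1" "\<forall>h\<in>set bs. h \<le> m"
  obtains w where "length w = m + (n - 1)"
    "nsteps (\<lambda>s. upper s = dE) w = m" "nsteps (\<lambda>s. lower s = dE) w = m"
    "nsteps (\<lambda>s. lower s = dN) w = n - 1"
    "levels (\<lambda>s. upper s = dE) 0 w = ts" "levels (\<lambda>s. lower s = dN) 0 w = bs"
proof
  define u where "u = path_at dN dE 0 ts (n - 1)"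
  define l where "l = path_at dE dN 0 bs m"
  have u: "levels (\<lambda>d. d = dE) 0 u = ts" "nsteps (\<lambda>d. d = dE) u = m" "nsteps (\<lambda>d. d = dN) u = n - 1"
    using levels_path_at[of dE dN ts 0 "n - 1"] assms(1-3) unfolding u_def by auto
  have l: "levels (\<lambda>d. d = dN) 0 l = bs" "nsteps (\<lambda>d. d = dN) l = n - 1" "nsteps (\<lambda>d. d = dE) l = m"
    using levels_path_at[of dN dE bs 0 m] assms(4-6) unfolding l_def by auto
  have len: "length u = m + (n - 1)" "length l = m + (n - 1)"
    using nsteps_dir_compl[of "\<lambda>d. d" u] nsteps_dir_compl[of "\<lambda>d. d" l] u l by simp_all
  define w where "w = map (\<lambda>(x, y). xi_step x y) (zip u l)"
  have "map upper w = u" "map lower w = l"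
    using len unfolding w_def by (simp_all add: comp_def case_prod_unfold)
  then show "length w = m + (n - 1)"
    "nsteps (\<lambda>s. upper s = dE) w = m" "nsteps (\<lambda>s. lower s = dE) w = m"
    "nsteps (\<lambda>s. lower s = dN) w = n - 1"
    "levels (\<lambda>s. upper s = dE) 0 w = ts" "levels (\<lambda>s. lower s = dN) 0 w = bs"
    using u l len by (auto simp: levels_map filter_map comp_def)
qed

text \<open>The corner (m, n) cannot be met on the top side, since c(T m) < n.\<close>
lemma SDR_B_last:
  assumes "1 \<le> n" "c \<in> SDR m n"
  shows "c (B n) = m"
proof -
  have "stable m n c" "no_forbidden_corner m n c"
    using assms SDR_iff by blast+
  then have "c (B n) \<le> m" and "1 \<le> m \<Longrightarrow> c (T m) < n \<and> (n \<le> c (T m) \<or> m \<le> c (B n))"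
    using assms(1) unfolding stable_iff no_forbidden_corner_def by auto
  then show ?thesis
    by (cases "m = 0") auto
qed

lemma SDR_eq_cfg_of:
  assumes "1 \<le> n" "c \<in> SDR m n"
  obtains w where "w \<in> Motz m (n - 1)" "cfg_of m n w = c"
proof -
  have c: "sorted_cfg m n c" "valid_cfg m n c" "stable m n c" "no_forbidden_corner m n c"
    using assms SDR_iff by blast+
  have bottoms: "bottoms n c = bottoms (n - 1) c @ [m]"
    using bottoms_Suc[of "n - 1" c] SDR_B_last[OF assms] assms(1) by simp
  obtain w where w: "length w = m + (n - 1)"
    "nsteps (\<lambda>s. upper s = dE) w = m" "nsteps (\<lambda>s. lower s = dE) w = m"
    "nsteps (\<lambda>s. lower s = dN) w = n - 1"
    "levels (\<lambda>s. upper s = dE) 0 w = tops m c" "levels (\<lambda>s. lower s = dN) 0 w = bottoms (n - 1) c"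
  proof (rule ex_word_with_levels)
    show "sorted (tops m c)" "sorted (bottoms (n - 1) c)"
      using c(1) bottoms by (simp_all add: sorted_cfg_iff sorted_append)
    show "\<forall>h\<in>set (tops m c). h \<le> n - 1" "\<forall>h\<in>set (bottoms (n - 1) c). h \<le> m"
      using c(3) bottoms unfolding stable_iff_lists by fastforce+
  qed simp_all
  have "cfg_of m n w = c"
    using w bottoms tops_cfg_of[OF w(2)] bottoms_cfg_of[OF assms(1) w(4)]
    by (intro cfg_eqI[OF valid_cfg_of[OF assms(1)] c(2)]) simp_all
  moreover have "w \<in> Motz m (n - 1)"
    using Motz_if_no_forbidden_corner[OF assms(1) w(1-4)] calculation c(4) by simp
  ultimately show ?thesis
    using that by blast
qed

lemma cfg_of_Xi_Phi:
  assumes "1 \<le> n" "c \<in> SDR m n"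
  shows "cfg_of m n (Xi (Phi m n c)) = c"
proof -
  obtain w where "w \<in> Motz m (n - 1)" "cfg_of m n w = c"
    using SDR_eq_cfg_of[OF assms] .
  then show ?thesis
    using Phi_cfg_of[OF assms(1)] Xi_paths_of by metis
qed

theorem theorem4p14:
  fixes m n :: nat
  assumes "n \<ge> 1"
  shows "(\<forall>w \<in> Motz m (n - 1).
            cfg_of m n w \<in> SDR m n \<and> Xi (Phi m n (cfg_of m n w)) = w)
       \<and> bij_betw (cfg_of m n) (Motz m (n - 1)) (SDR m n)
       \<and> (\<forall>w \<in> Motz m (n - 1).
            cfg_of m n w = inv_into (SDR m n) (Phi m n) (inv_into (Polys m n) Xi w))"
proof (intro conjI ballI)
  fix w
  assume w: "w \<in> Motz m (n - 1)"
  show "cfg_of m n w \<in> SDR m n"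
    using cfg_of_in_SDR[OF assms w] .
  show Xi_Phi: "Xi (Phi m n (cfg_of m n w)) = w"
    using Phi_cfg_of[OF assms w] Xi_paths_of by simp
  have "inv_into (Polys m n) Xi w = Phi m n (cfg_of m n w)"
    using inv_into_f_eq[OF inj_on_Xi_Polys[OF assms]] paths_of_in_Polys[OF assms w]
      Phi_cfg_of[OF assms w] Xi_Phi by simp
  moreover have "inj_on (Phi m n) (SDR m n)"
    using cfg_of_Xi_Phi[OF assms] by (metis inj_onI)
  ultimately show "cfg_of m n w = inv_into (SDR m n) (Phi m n) (inv_into (Polys m n) Xi w)"
    using cfg_of_in_SDR[OF assms w] by simp
next
  have "inj_on (cfg_of m n) (Motz m (n - 1))"
    using Phi_cfg_of[OF assms] Xi_paths_of by (metis inj_onI)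
  moreover have "cfg_of m n ` Motz m (n - 1) = SDR m n"
    using cfg_of_in_SDR[OF assms] SDR_eq_cfg_of[OF assms] by (metis image_eqI image_subsetI subsetI subset_antisym)
  ultimately show "bij_betw (cfg_of m n) (Motz m (n - 1)) (SDR m n)"
    unfolding bij_betw_def ..
qed

end
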